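(* Let $\widehat G$ be a signed ribbon graph and let $L=L_{\widehat G}\subset G\times I$ be the corresponding signed medial link, with diagram $\widetilde L=\widetilde L_{\widehat G}$, endowed with an orientation. Then $$J_L(t)=(-1)^{w(\widetilde L)}\,t^{\frac{3w(\widetilde L)-r(\widehat G)+n(\widehat G)}{4}}\,\bigl(-t^{1/2}-t^{-1/2}\bigr)^{k(\widehat G)-1}\,R_{\widehat G}\Bigl(-t-1,\,-t^{-1}-1,\,\frac{1}{-t^{1/2}-t^{-1/2}}\Bigr).$$ In particular, if $\widehat G$ is a planar ribbon graph (its surface has genus zero) with only positive edges and with underlying abstract graph $\Gamma$, then $$J_L(t)=(-1)^{w(\widetilde L)}\,t^{\frac{3w(\widetilde L)-r(\widehat G)+n(\widehat G)}{4}}\,\bigl(-t^{1/2}-t^{-1/2}\bigr)^{k(\widehat G)-1}\,T_\Gamma(-t,-t^{-1}),$$ where $T_\Gamma$ is the classical Tutte polynomial of $\Gamma$.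
   Context: A ribbon graph $G$ is a graph $\Gamma=(V,E)$ (loops and multiple edges allowed) with a fixed cyclic order of edge-ends at each vertex; equivalently a compact surface with boundary that is a union of closed vertex discs and edge ribbons meeting in disjoint line segments, each segment on the boundary of exactly one vertex disc and one edge ribbon, each ribbon containing exactly two segments. The surface $G$ is oriented (counterclockwise rotation). For a ribbon graph $F$: $v(F),e(F),k(F)$ are the numbers of vertices, edges, connected components; $r(F)=v(F)-k(F)$, $n(F)=e(F)-r(F)$; $\mathrm{bc}(F)$ is the number of boundary components of the surface $F$. A spanning subgraph contains all vertices and a subset of edges; $\mathcal F(G)$ is the set of them; $\overline F=G-F$ is the complementary spanning subgraph. A signed ribbon graph $\widehat G$ is $G$ with a sign function $\varepsilon:E\to\{\pm1\}$; $r(\widehat G),n(\widehat G),k(\widehat G)$ mean those of $G$; $e_-(F)$ is the number of edges of $F$ with sign $-1$, and $s(F)=\tfrac12\bigl(e_-(F)-e_-(\overline F)\bigr)$. The signed Bollobás–Riordan polynomial is $$R_{\widehat G}(x,y,z)=\sum_{F\in\mathcal F(G)}x^{r(G)-r(F)+s(F)}\,y^{n(F)-s(F)}\,z^{k(F)-\mathrm{bc}(F)+n(F)}.$$ Diagrams and Kauffman bracket: for a link in $G\times I$ ($I=[0,1]$) in general position w.r.t. projection to $G$, a diagram is its projected immersed curve with over/under information at finitely many double points. At a crossing the $A$-splitting joins the two local regions swept by the overcrossing arc rotated according to the orientation of $G$ until it reaches the undercrossing arc; the $B$-splitting joins the other two. A state $S$ chooses a splitting at each crossing; $\alpha(S),\beta(S)$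 count $A$- and $B$-splittings, $\delta(S)$ counts components of the resulting curve. $\langle\widetilde L\rangle(A,B,d)=\sum_S A^{\alpha(S)}B^{\beta(S)}d^{\delta(S)-1}$. Medial links: the medial graph $H_G$ in $G$ has one 4-valent vertex at the middle of each edge ribbon, its edges running along the ribbons and turning at vertex discs to the next ribbon in the cyclic order. Regions of $G\setminus H_G$ containing a vertex of $\Gamma$ are black, others white. The natural diagram $\widetilde L_G$ makes each vertex of $H_G$ a crossing so that the overcrossing branch, rotated according to the orientation of $G$ until the undercrossing branch, sweeps out the black regions. The signed medial link diagram $\widetilde L_{\widehat G}$ is obtained from $\widetilde L_G$ by switching overcrossing and undercrossing at crossings of negative edges. Jones polynomial: for an oriented link $L$ with diagram $\widetilde L$, the writhe $w(\widetilde L)$ is the sum over crossings of the standard crossing signs ($\pm1$) determined by the orientation, and $J_L(t):=(-1)^{w(\widetilde L)}t^{3w(\widetilde L)/4}\langle\widetilde L\rangle\bigl(t^{-1/4},t^{1/4},-t^{1/2}-t^{-1/2}\bigr)$. *)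

theory Defs
  imports "HOL-Analysis.Analysis"
begin

section \<open>Ribbon graphs as combinatorial maps\<close>

text \<open>A ribbon graph is given by a finite vertex set V, a finite set D of darts
(edge-ends), the incidence map vert from darts to vertices, the rotation sigma
(the counterclockwise cyclic order of darts at each vertex, one cycle per vertex)
and the fixed-point-free involution alpha pairing the two ends of each edge.\<close>

definition ribbon_graph ::
  "'v set \<Rightarrow> 'd set \<Rightarrow> ('d \<Rightarrow> 'v) \<Rightarrow> ('d \<Rightarrow> 'd) \<Rightarrow> ('d \<Rightarrow> 'd) \<Rightarrow> bool" where
  "ribbon_graph V D vert \<sigma> \<alpha> \<longleftrightarrow>
     finite V \<and> finite D \<and> vert ` D \<subseteq> V \<and>
     bij_betw \<alpha> D D \<and> (\<forall>h\<in>D. \<alpha> h \<noteq> h \<and> \<alpha> (\<alpha> h) = h) \<and>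
     bij_betw \<sigma> D D \<and> (\<forall>h\<in>D. vert (\<sigma> h) = vert h) \<and>
     (\<forall>h\<in>D. \<forall>h'\<in>D. vert h = vert h' \<longrightarrow> (\<exists>n. (\<sigma> ^^ n) h = h'))"

definition rg_edges :: "'d set \<Rightarrow> ('d \<Rightarrow> 'd) \<Rightarrow> 'd set set" where
  "rg_edges D \<alpha> = (\<lambda>h. {h, \<alpha> h}) ` D"

definition gr_components :: "'v set \<Rightarrow> ('e \<Rightarrow> 'v set) \<Rightarrow> 'e set \<Rightarrow> nat" where
  "gr_components V ends F =
     card (V // ({(u, w). \<exists>e\<in>F. u \<in> ends e \<and> w \<in> ends e})\<^sup>*)"

definition gr_rank :: "'v set \<Rightarrow> ('e \<Rightarrow> 'v set) \<Rightarrow> 'e set \<Rightarrow> nat" where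
  "gr_rank V ends F = card V - gr_components V ends F"

definition gr_nullity :: "'v set \<Rightarrow> ('e \<Rightarrow> 'v set) \<Rightarrow> 'e set \<Rightarrow> nat" where
  "gr_nullity V ends F = card F - gr_rank V ends F"

definition tutte :: "'v set \<Rightarrow> 'e set \<Rightarrow> ('e \<Rightarrow> 'v set) \<Rightarrow> real \<Rightarrow> real \<Rightarrow> real" where
  "tutte V E ends x y =
     (\<Sum>F\<in>Pow E. (x - 1) ^ (gr_rank V ends E - gr_rank V ends F) * (y - 1) ^ (gr_nullity V ends F))"

text \<open>Spanning subgraphs are subsets F of rg_edges D alpha; the underlying
abstract graph has ends e = vert ` e.\<close>

definition rg_k :: "'v set \<Rightarrow> ('d \<Rightarrow> 'v) \<Rightarrow> 'd set set \<Rightarrow> nat" where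
  "rg_k V vert F = gr_components V (\<lambda>e. vert ` e) F"

definition rg_r :: "'v set \<Rightarrow> ('d \<Rightarrow> 'v) \<Rightarrow> 'd set set \<Rightarrow> nat" where
  "rg_r V vert F = gr_rank V (\<lambda>e. vert ` e) F"

definition rg_n :: "'v set \<Rightarrow> ('d \<Rightarrow> 'v) \<Rightarrow> 'd set set \<Rightarrow> nat" where
  "rg_n V vert F = gr_nullity V (\<lambda>e. vert ` e) F"

definition induced_rot :: "('d \<Rightarrow> 'd) \<Rightarrow> 'd set \<Rightarrow> 'd \<Rightarrow> 'd" where
  "induced_rot \<sigma> S h = (\<sigma> ^^ (LEAST n. n > 0 \<and> (\<sigma> ^^ n) h \<in> S)) h"

text \<open>Boundary components of the ribbon subgraph F: the orbits of the face
permutation (induced rotation composed with alpha) on the darts of F, plus one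
boundary circle for each vertex not incident to any edge of F.\<close>

definition rg_bc ::
  "'v set \<Rightarrow> ('d \<Rightarrow> 'v) \<Rightarrow> ('d \<Rightarrow> 'd) \<Rightarrow> ('d \<Rightarrow> 'd) \<Rightarrow> 'd set set \<Rightarrow> nat" where
  "rg_bc V vert \<sigma> \<alpha> F =
     (let S = \<Union>F in
       card (S // {(h, h'). h \<in> S \<and> h' \<in> S \<and> (\<exists>n. ((induced_rot \<sigma> S \<circ> \<alpha>) ^^ n) h = h')})
       + card {v\<in>V. \<forall>h\<in>S. vert h \<noteq> v})"

text \<open>Genus of the surface G (sum over components): 2g = k - bc + n.\<close>

definition rg_genus ::
  "'v set \<Rightarrow> 'd set \<Rightarrow> ('d \<Rightarrow> 'v) \<Rightarrow> ('d \<Rightarrow> 'd) \<Rightarrow> ('d \<Rightarrow> 'd) \<Rightarrow> int" where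
  "rg_genus V D vert \<sigma> \<alpha> =
     (let E = rg_edges D \<alpha> in
       (int (rg_k V vert E) - int (rg_bc V vert \<sigma> \<alpha> E) + int (rg_n V vert E)) div 2)"

text \<open>pos e = True iff edge e has sign +1.\<close>

definition neg_count :: "('d set \<Rightarrow> bool) \<Rightarrow> 'd set set \<Rightarrow> nat" where
  "neg_count pos F = card {e\<in>F. \<not> pos e}"

text \<open>Evaluation of the signed Bollobas--Riordan polynomial at complex x, y, z;
half-integer powers are principal complex powers.\<close>

definition signed_BR ::
  "'v set \<Rightarrow> 'd set \<Rightarrow> ('d \<Rightarrow> 'v) \<Rightarrow> ('d \<Rightarrow> 'd) \<Rightarrow> ('d \<Rightarrow> 'd) \<Rightarrow> ('d set \<Rightarrow> bool)
     \<Rightarrow> complex \<Rightarrow> complex \<Rightarrow> complex \<Rightarrow> complex" where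
  "signed_BR V D vert \<sigma> \<alpha> pos x y z =
     (let E = rg_edges D \<alpha> in
       \<Sum>F\<in>Pow E.
         (let s = (real (neg_count pos F) - real (neg_count pos (E - F))) / 2 in
           x powr complex_of_real (real (rg_r V vert E) - real (rg_r V vert F) + s)
           * y powr complex_of_real (real (rg_n V vert F) - s)
           * z ^ nat (int (rg_k V vert F) - int (rg_bc V vert \<sigma> \<alpha> F) + int (rg_n V vert F))))"

section \<open>Link diagrams on a surface (combinatorial), Kauffman bracket, writhe, Jones\<close>

text \<open>A diagram: a finite set C of crossings; port c 0, port c 1, port c 2, port c 3
are the four ends of the curve at crossing c in counterclockwise order, the
overcrossing strand being port c 0 -- port c 2 and the undercrossing strand
port c 1 -- port c 3; nxt p is the port at the other end of the arc of the
curve leaving the crossing through p; loops counts crossing-free closed curves.\<close>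

definition diag_ports :: "'c set \<Rightarrow> ('c \<Rightarrow> nat \<Rightarrow> 'p) \<Rightarrow> 'p set" where
  "diag_ports C port = (\<Union>c\<in>C. port c ` {0..3})"

text \<open>Splitting pairs for a state S (the set of crossings with A-splitting).
A-splitting joins the regions swept by the overstrand rotated counterclockwise,
i.e. the regions between ports 0,1 and between ports 2,3; the new arcs then
connect ports 1--2 and 3--0. B-splitting connects 0--1 and 2--3.\<close>

definition smooth_pairs :: "'c set \<Rightarrow> ('c \<Rightarrow> nat \<Rightarrow> 'p) \<Rightarrow> 'c set \<Rightarrow> ('p \<times> 'p) set" where
  "smooth_pairs C port S =
     (\<Union>c\<in>C. if c \<in> S then {(port c 1, port c 2), (port c 3, port c 0)}
             else {(port c 0, port c 1), (port c 2, port c 3)})"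

definition state_components ::
  "'c set \<Rightarrow> ('c \<Rightarrow> nat \<Rightarrow> 'p) \<Rightarrow> ('p \<Rightarrow> 'p) \<Rightarrow> nat \<Rightarrow> 'c set \<Rightarrow> nat" where
  "state_components C port nxt loops S =
     (let P = diag_ports C port;
          R = {(p, nxt p) | p. p \<in> P} \<union> smooth_pairs C port S
      in card (P // (R \<union> R\<inverse>)\<^sup>*) + loops)"

definition kauffman_bracket ::
  "'c set \<Rightarrow> ('c \<Rightarrow> nat \<Rightarrow> 'p) \<Rightarrow> ('p \<Rightarrow> 'p) \<Rightarrow> nat \<Rightarrow> real \<Rightarrow> real \<Rightarrow> real \<Rightarrow> real" where
  "kauffman_bracket C port nxt loops A B d =
     (\<Sum>S\<in>Pow C. A ^ card S * B ^ card (C - S)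
                 * d powi (int (state_components C port nxt loops S) - 1))"

text \<open>An orientation: ori p = True iff the oriented curve enters the crossing through port p.\<close>

definition diag_orientation ::
  "'c set \<Rightarrow> ('c \<Rightarrow> nat \<Rightarrow> 'p) \<Rightarrow> ('p \<Rightarrow> 'p) \<Rightarrow> ('p \<Rightarrow> bool) \<Rightarrow> bool" where
  "diag_orientation C port nxt ori \<longleftrightarrow>
     (\<forall>c\<in>C. ori (port c 0) \<noteq> ori (port c 2) \<and> ori (port c 1) \<noteq> ori (port c 3)) \<and>
     (\<forall>p\<in>diag_ports C port. ori (nxt p) \<noteq> ori p)"

text \<open>Crossing sign: +1 iff the under direction is the over direction rotated
counterclockwise by a right angle.\<close>

definition writhe :: "'c set \<Rightarrow> ('c \<Rightarrow> nat \<Rightarrow> 'p) \<Rightarrow> ('p \<Rightarrow> bool) \<Rightarrow> int" where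
  "writhe C port ori = (\<Sum>c\<in>C. if ori (port c 0) = ori (port c 1) then 1 else -1)"

definition jones ::
  "'c set \<Rightarrow> ('c \<Rightarrow> nat \<Rightarrow> 'p) \<Rightarrow> ('p \<Rightarrow> 'p) \<Rightarrow> nat \<Rightarrow> ('p \<Rightarrow> bool) \<Rightarrow> real \<Rightarrow> real" where
  "jones C port nxt loops ori t =
     (let w = writhe C port ori in
       (-1) powi w * t powr (3 * real_of_int w / 4)
       * kauffman_bracket C port nxt loops (t powr (-1/4)) (t powr (1/4))
           (- (t powr (1/2)) - t powr (-1/2)))"

section \<open>The signed medial link diagram of a signed ribbon graph\<close>

text \<open>Ports are pairs (h, b): (h, True) is the end of the
medial curve leaving the crossing of edge {h, alpha h} towards the corner between
h and sigma h; (h, False) towards the corner between sigma^-1 h and h.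
Drawing the edge with the dart h on the left, counterclockwise order of the
ports is (alpha h, False), (h, True), (h, False), (alpha h, True); the black
(vertex) regions lie between (h,True),(h,False) and between (alpha h,True),(alpha h,False).
For positive edges the overstrand is (h,True)--(alpha h,True) (rotating it
counterclockwise sweeps the black regions); for negative edges it is switched.\<close>

definition med_dart :: "'d set \<Rightarrow> 'd" where
  "med_dart e = (SOME h. h \<in> e)"

definition med_port :: "('d \<Rightarrow> 'd) \<Rightarrow> ('d set \<Rightarrow> bool) \<Rightarrow> 'd set \<Rightarrow> nat \<Rightarrow> 'd \<times> bool" where
  "med_port \<alpha> pos e i =
     (let h = med_dart e; h' = \<alpha> h in
       if pos e then [(h, True), (h, False), (h', True), (h', False)] ! i
       else [(h', False), (h, True), (h, False), (h', True)] ! i)"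

definition med_arc :: "'d set \<Rightarrow> ('d \<Rightarrow> 'd) \<Rightarrow> 'd \<times> bool \<Rightarrow> 'd \<times> bool" where
  "med_arc D \<sigma> p =
     (if snd p then (\<sigma> (fst p), False) else (the_inv_into D \<sigma> (fst p), True))"

text \<open>Each isolated vertex contributes a crossing-free circle (boundary of its disc).\<close>

definition med_loops :: "'v set \<Rightarrow> 'd set \<Rightarrow> ('d \<Rightarrow> 'v) \<Rightarrow> nat" where
  "med_loops V D vert = card {v\<in>V. \<forall>h\<in>D. vert h \<noteq> v}"

definition medial_orientation ::
  "'d set \<Rightarrow> ('d \<Rightarrow> 'd) \<Rightarrow> ('d \<Rightarrow> 'd) \<Rightarrow> ('d set \<Rightarrow> bool) \<Rightarrow> ('d \<times> bool \<Rightarrow> bool) \<Rightarrow> bool" where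
  "medial_orientation D \<sigma> \<alpha> pos ori =
     diag_orientation (rg_edges D \<alpha>) (med_port \<alpha> pos) (med_arc D \<sigma>) ori"

definition medial_writhe ::
  "'d set \<Rightarrow> ('d \<Rightarrow> 'd) \<Rightarrow> ('d set \<Rightarrow> bool) \<Rightarrow> ('d \<times> bool \<Rightarrow> bool) \<Rightarrow> int" where
  "medial_writhe D \<alpha> pos ori = writhe (rg_edges D \<alpha>) (med_port \<alpha> pos) ori"

definition medial_jones ::
  "'v set \<Rightarrow> 'd set \<Rightarrow> ('d \<Rightarrow> 'v) \<Rightarrow> ('d \<Rightarrow> 'd) \<Rightarrow> ('d \<Rightarrow> 'd) \<Rightarrow> ('d set \<Rightarrow> bool)
     \<Rightarrow> ('d \<times> bool \<Rightarrow> bool) \<Rightarrow> real \<Rightarrow> real" where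
  "medial_jones V D vert \<sigma> \<alpha> pos ori t =
     jones (rg_edges D \<alpha>) (med_port \<alpha> pos) (med_arc D \<sigma>) (med_loops V D vert) ori t"

end

theory Submission
  imports Defs
begin

text \<open>
  Expand the Kauffman bracket of the medial diagram as a state sum. A state \<open>S\<close> determines the
  spanning subgraph \<open>F\<close> of positive edges with \<open>A\<close>-splitting and negative edges with \<open>B\<close>-splitting,
  and the curve obtained by splitting runs once around each boundary component of the ribbon
  subgraph \<open>F\<close>. Combinatorially, these boundary components are the orbits of the face permutation
  \<open>\<sigma> \<circ> edge_flip \<alpha> F\<close> on darts, which the curve traverses at every second step. Adding an edge to
  \<open>F\<close> composes the face permutation with a transposition and so changes the number of
  boundary components by one; hence \<open>2g(F) = k(F) - bc(F) + n(F)\<close> is even, non-negative and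
  monotone in \<open>F\<close>. Comparing the state sum termwise with the Bollobas-Riordan expansion, the
  exponents agree by \<open>r(F) + n(F) = |F|\<close>. If the surface is planar, every spanning subgraph has
  genus zero, and for positive edges the polynomial becomes the Tutte polynomial.
\<close>

section \<open>Orbits of permutations of finite sets\<close>

definition forward_orbit :: "('a \<Rightarrow> 'a) \<Rightarrow> 'a \<Rightarrow> 'a set" where
  "forward_orbit f x = range (\<lambda>n. (f ^^ n) x)"

definition perm_on :: "'a set \<Rightarrow> ('a \<Rightarrow> 'a) \<Rightarrow> bool" where
  "perm_on A f \<longleftrightarrow> finite A \<and> f ` A \<subseteq> A \<and> inj_on f A"

lemma funpow_in_forward_orbit: "(f ^^ n) x \<in> forward_orbit f x"
  unfolding forward_orbit_def by blast

lemma self_in_forward_orbit: "x \<in> forward_orbit f x"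
  using funpow_in_forward_orbit[where n = 0] by simp

lemma forward_orbitE:
  assumes "y \<in> forward_orbit f x"
  obtains n where "y = (f ^^ n) x"
  using assms unfolding forward_orbit_def by blast

lemma funpow_add_apply: "(f ^^ (m + n)) x = (f ^^ m) ((f ^^ n) x)"
  by (simp add: funpow_add)

lemma funpow_closed: "x \<in> U \<Longrightarrow> (\<And>y. y \<in> U \<Longrightarrow> f y \<in> U) \<Longrightarrow> (f ^^ n) x \<in> U"
  by (induction n) auto

lemma forward_orbit_subset: "x \<in> U \<Longrightarrow> (\<And>y. y \<in> U \<Longrightarrow> f y \<in> U) \<Longrightarrow> forward_orbit f x \<subseteq> U"
  by (auto elim!: forward_orbitE intro: funpow_closed)

lemma forward_orbit_trans: "y \<in> forward_orbit f x \<Longrightarrow> forward_orbit f y \<subseteq> forward_orbit f x"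
proof
  fix z assume "y \<in> forward_orbit f x" "z \<in> forward_orbit f y"
  then obtain m n where "y = (f ^^ m) x" "z = (f ^^ n) y" by (auto elim!: forward_orbitE)
  then have "z = (f ^^ (n + m)) x" by (simp add: funpow_add)
  then show "z \<in> forward_orbit f x" by (simp add: funpow_in_forward_orbit)
qed

lemma apply_in_forward_orbit: "y \<in> forward_orbit f x \<Longrightarrow> f y \<in> forward_orbit f x"
  using forward_orbit_trans funpow_in_forward_orbit[where n = 1 and x = y] by fastforce

lemma perm_on_funpow_closed: "perm_on A f \<Longrightarrow> x \<in> A \<Longrightarrow> (f ^^ n) x \<in> A"
  unfolding perm_on_def by (rule funpow_closed) auto

lemma perm_on_inj_on_funpow: "perm_on A f \<Longrightarrow> inj_on (f ^^ n) A"
proof (induction n)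
  case (Suc n)
  then have "inj_on (f \<circ> f ^^ n) A"
    using Suc.prems perm_on_funpow_closed[OF Suc.prems] unfolding perm_on_def
    by (intro comp_inj_on) (auto intro: inj_on_subset)
  then show ?case by (simp add: comp_def)
qed simp

lemma funpow_cancel_left:
  assumes "perm_on A f" "x \<in> A" "(f ^^ i) x = (f ^^ (i + k)) x"
  shows "(f ^^ k) x = x"
proof -
  have "(f ^^ i) ((f ^^ k) x) = (f ^^ i) x"
    using assms(3) by (simp add: funpow_add add.commute)
  moreover have "(f ^^ k) x \<in> A" by (rule perm_on_funpow_closed[OF assms(1,2)])
  ultimately show ?thesis
    using inj_onD[OF perm_on_inj_on_funpow[OF assms(1)]] assms(2) by blast
qed

lemma perm_on_periodic:
  assumes "perm_on A f" "x \<in> A"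
  obtains p where "p > 0" "(f ^^ p) x = x"
proof -
  have "(\<lambda>n. (f ^^ n) x) ` {..card A} \<subseteq> A"
    using perm_on_funpow_closed[OF assms] by auto
  moreover have "finite A" using assms(1) unfolding perm_on_def by simp
  ultimately have "\<not> inj_on (\<lambda>n. (f ^^ n) x) {..card A}"
    using card_inj_on_le[of "\<lambda>n. (f ^^ n) x" "{..card A}" A] by fastforce
  then obtain i j where "i \<le> card A" "j \<le> card A" "i \<noteq> j" "(f ^^ i) x = (f ^^ j) x"
    unfolding inj_on_def by blast
  then obtain i j where "i < j" "(f ^^ i) x = (f ^^ j) x"
    by (metis linorder_neqE_nat)
  then show thesis
    using that[of "j - i"] funpow_cancel_left[OF assms, of i "j - i"] by simp
qed

lemma funpow_periodic_mult: "(f ^^ p) x = x \<Longrightarrow> (f ^^ (p * k)) x = x"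
  by (induction k) (simp_all add: funpow_add)

lemma forward_orbit_sym:
  assumes "perm_on A f" "x \<in> A" "y \<in> forward_orbit f x"
  shows "x \<in> forward_orbit f y"
proof -
  obtain p where p: "p > 0" "(f ^^ p) x = x" using perm_on_periodic[OF assms(1,2)] .
  obtain m where m: "y = (f ^^ m) x" using assms(3) by (auto elim: forward_orbitE)
  have "(f ^^ (p * m - m + m)) x = x"
    using funpow_periodic_mult[OF p(2)] p(1) by (simp add: nat_mult_le_cancel_disj)
  then have "(f ^^ (p * m - m)) y = x" by (simp add: m funpow_add)
  then show ?thesis by (metis funpow_in_forward_orbit)
qed

lemma forward_orbit_eq:
  assumes "perm_on A f" "x \<in> A" "y \<in> forward_orbit f x"
  shows "forward_orbit f y = forward_orbit f x"
  using forward_orbit_trans[OF assms(3)] forward_orbit_trans[OF forward_orbit_sym[OF assms]] by blast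

lemma forward_orbit_periodic_cases:
  assumes "(f ^^ N) x = x" "0 < N" "y \<in> forward_orbit f x"
  obtains i where "1 \<le> i" "i \<le> N" "y = (f ^^ i) x"
proof -
  obtain n where n: "y = (f ^^ n) x" using assms(3) by (auto elim: forward_orbitE)
  have "(f ^^ n) x = (f ^^ (n mod N)) ((f ^^ (N * (n div N))) x)"
    by (metis div_mult_mod_eq funpow_add comp_apply mult.commute add.commute)
  then have "y = (f ^^ (n mod N)) x" using n funpow_periodic_mult[OF assms(1)] by simp
  then show thesis
  proof (cases "n mod N = 0")
    case True
    then show thesis using that[of N] \<open>y = (f ^^ (n mod N)) x\<close> assms by simp
  next
    case False
    then show thesis using that[of "n mod N"] \<open>y = (f ^^ (n mod N)) x\<close> assms by simp
  qed
qed

definition min_period :: "('a \<Rightarrow> 'a) \<Rightarrow> 'a \<Rightarrow> nat" where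
  "min_period f x = (LEAST p. 0 < p \<and> (f ^^ p) x = x)"

lemma min_period:
  assumes "perm_on A f" "x \<in> A"
  shows "0 < min_period f x" "(f ^^ min_period f x) x = x"
    and "\<And>i. 0 < i \<Longrightarrow> i < min_period f x \<Longrightarrow> (f ^^ i) x \<noteq> x"
proof -
  obtain p where "0 < p \<and> (f ^^ p) x = x" using perm_on_periodic[OF assms] by blast
  then show "0 < min_period f x" "(f ^^ min_period f x) x = x"
    using LeastI[where P = "\<lambda>p. 0 < p \<and> (f ^^ p) x = x"] unfolding min_period_def by auto
  show "\<And>i. 0 < i \<Longrightarrow> i < min_period f x \<Longrightarrow> (f ^^ i) x \<noteq> x"
    using not_less_Least unfolding min_period_def by blast
qed

lemma min_period_funpow_inj:
  assumes "perm_on A f" "x \<in> A" "i < min_period f x" "j < min_period f x" "(f ^^ i) x = (f ^^ j) x"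
  shows "i = j"
  using inj_on_funpow_least[OF min_period(2,3)[OF assms(1,2)]] assms(3-5)
  unfolding inj_on_def by auto

section \<open>Composing a permutation with a transposition\<close>

lemma card_image_merge:
  assumes "finite A" and cls: "\<And>x. x \<in> A \<Longrightarrow> x \<in> cls x"
    and eq: "\<And>x y. x \<in> A \<Longrightarrow> y \<in> A \<Longrightarrow> y \<in> cls x \<Longrightarrow> cls y = cls x"
    and ab: "a \<in> A" "b \<in> A" "cls a \<noteq> cls b"
    and outside: "\<And>x. x \<in> A \<Longrightarrow> x \<notin> cls a \<union> cls b \<Longrightarrow> cls' x = cls x"
    and inside: "\<And>x. x \<in> A \<Longrightarrow> x \<in> cls a \<union> cls b \<Longrightarrow> cls' x = cls a \<union> cls b"
  shows "card (cls' ` A) + 1 = card (cls ` A)"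
proof -
  define B where "B = A - (cls a \<union> cls b)"
  have A_cls: "cls ` A = {cls a, cls b} \<union> cls ` B"
  proof (intro equalityI subsetI)
    fix X assume "X \<in> cls ` A"
    then obtain x where x: "x \<in> A" "X = cls x" by blast
    then show "X \<in> {cls a, cls b} \<union> cls ` B"
      using eq[OF ab(1) x(1)] eq[OF ab(2) x(1)] unfolding B_def by (cases "x \<in> cls a \<union> cls b") auto
  qed (use ab in \<open>auto simp: B_def\<close>)
  have A_cls': "cls' ` A = {cls a \<union> cls b} \<union> cls ` B"
  proof (intro equalityI subsetI)
    fix X assume "X \<in> cls' ` A"
    then obtain x where x: "x \<in> A" "X = cls' x" by blast
    then show "X \<in> {cls a \<union> cls b} \<union> cls ` B"
      using outside[OF x(1)] inside[OF x(1)] unfolding B_def by (cases "x \<in> cls a \<union> cls b") auto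
  next
    fix X assume "X \<in> {cls a \<union> cls b} \<union> cls ` B"
    moreover have "cls' a = cls a \<union> cls b" using inside ab(1) cls by blast
    ultimately show "X \<in> cls' ` A"
      using ab(1) outside unfolding B_def by (auto intro: rev_image_eqI)
  qed
  have "X \<notin> cls ` B" if "X \<in> {cls a, cls b, cls a \<union> cls b}" for X
    using that cls unfolding B_def by auto
  moreover have "finite (cls ` B)" using \<open>finite A\<close> unfolding B_def by simp
  ultimately show ?thesis
    unfolding A_cls A_cls' using ab(3) by (simp add: card_insert_if)
qed

lemma perm_on_comp_transpose:
  assumes "perm_on A f" "a \<in> A" "b \<in> A"
  shows "perm_on A (f \<circ> Transposition.transpose a b)"
proof -
  have "Transposition.transpose a b ` A = A"
    using assms(2,3) by (auto simp: Transposition.transpose_def image_iff)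
  then show ?thesis
    using assms(1) inj_on_transpose unfolding perm_on_def by (auto intro: comp_inj_on)
qed

lemma funpow_comp_transpose_avoiding:
  "(\<And>i. i < n \<Longrightarrow> (f ^^ i) x \<notin> {a, b}) \<Longrightarrow>
     ((f \<circ> Transposition.transpose a b) ^^ n) x = (f ^^ n) x"
  by (induction n) auto

lemma forward_orbit_comp_transpose_avoiding:
  assumes "a \<notin> forward_orbit f x" "b \<notin> forward_orbit f x"
  shows "forward_orbit (f \<circ> Transposition.transpose a b) x = forward_orbit f x"
proof -
  have "((f \<circ> Transposition.transpose a b) ^^ n) x = (f ^^ n) x" for n
    using assms funpow_in_forward_orbit[where f = f and x = x] by (intro funpow_comp_transpose_avoiding) blast
  then show ?thesis unfolding forward_orbit_def by simp
qed

lemma funpow_Suc_comp_transpose: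
  assumes "\<And>i. i < n \<Longrightarrow> (f ^^ i) (f b) \<notin> {a, b}"
  shows "((f \<circ> Transposition.transpose a b) ^^ Suc n) a = (f ^^ Suc n) b"
proof -
  have "((f \<circ> Transposition.transpose a b) ^^ Suc n) a = ((f \<circ> Transposition.transpose a b) ^^ n) (f b)"
    by (simp add: funpow_swap1)
  also have "\<dots> = (f ^^ n) (f b)" by (rule funpow_comp_transpose_avoiding[OF assms])
  finally show ?thesis by (simp add: funpow_swap1)
qed

text \<open>Starting at \<open>a\<close>, the map \<open>f \<circ> (a b)\<close> first runs through the whole \<open>f\<close>-cycle of \<open>b\<close>.\<close>

lemma funpow_comp_transpose_other_cycle:
  assumes "perm_on A f" "b \<in> A" "a \<notin> forward_orbit f b" "j < min_period f b"
  shows "((f \<circ> Transposition.transpose a b) ^^ Suc j) a = (f ^^ Suc j) b"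
proof (rule funpow_Suc_comp_transpose)
  fix i assume "i < j"
  then have "(f ^^ Suc i) b \<noteq> b" using min_period(3)[OF assms(1,2), of "Suc i"] assms(4) by linarith
  moreover have "(f ^^ Suc i) b \<noteq> a" using assms(3) funpow_in_forward_orbit by metis
  ultimately show "(f ^^ i) (f b) \<notin> {a, b}" by (simp add: funpow_swap1)
qed

lemma funpow_comp_transpose_both_cycles:
  assumes f: "perm_on A f" and ab: "a \<in> A" "b \<in> A" "b \<notin> forward_orbit f a"
  defines "g \<equiv> f \<circ> Transposition.transpose a b"
  shows "\<And>j. j < min_period f b \<Longrightarrow> (g ^^ Suc j) a = (f ^^ Suc j) b"
    and "\<And>j. j < min_period f a \<Longrightarrow> (g ^^ (Suc j + min_period f b)) a = (f ^^ Suc j) a"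
proof -
  have a_notin: "a \<notin> forward_orbit f b" using forward_orbit_sym[OF f ab(2)] ab(3) by blast
  show run_b: "(g ^^ Suc j) a = (f ^^ Suc j) b" if "j < min_period f b" for j
    unfolding g_def using funpow_comp_transpose_other_cycle[OF f ab(2) a_notin that] .
  show "(g ^^ (Suc j + min_period f b)) a = (f ^^ Suc j) a" if "j < min_period f a" for j
  proof -
    have "(g ^^ (Suc j + min_period f b)) a = (g ^^ Suc j) ((g ^^ min_period f b) a)"
      by (simp only: funpow_add comp_apply)
    also have "(g ^^ min_period f b) a = b"
      using run_b[of "min_period f b - 1"] min_period(1,2)[OF f ab(2)] by simp
    also have "(g ^^ Suc j) b = (f ^^ Suc j) a"
      unfolding g_def transpose_commute[of a b]
      using funpow_comp_transpose_other_cycle[OF f ab(1,3) that] .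
    finally show ?thesis .
  qed
qed

lemma forward_orbit_comp_transpose_merge:
  assumes f: "perm_on A f" and ab: "a \<in> A" "b \<in> A" "b \<notin> forward_orbit f a"
  shows "forward_orbit (f \<circ> Transposition.transpose a b) a = forward_orbit f a \<union> forward_orbit f b"
proof
  let ?g = "f \<circ> Transposition.transpose a b"
  note run = funpow_comp_transpose_both_cycles[OF f ab]
  have "forward_orbit f c \<subseteq> forward_orbit ?g a" if c: "c \<in> {a, b}" for c
  proof
    have "c \<in> A" using c ab by blast
    fix y assume "y \<in> forward_orbit f c"
    then obtain i where i: "1 \<le> i" "i \<le> min_period f c" "y = (f ^^ i) c"
      using forward_orbit_periodic_cases[OF min_period(2,1)[OF f \<open>c \<in> A\<close>]] by blast
    from c consider "c = a" | "c = b" by blast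
    then have "y = (?g ^^ (i + min_period f b)) a \<or> y = (?g ^^ i) a"
    proof cases
      case 1
      then show ?thesis using i run(2)[of "i - 1"] by simp
    next
      case 2
      then show ?thesis using i run(1)[of "i - 1"] by simp
    qed
    then show "y \<in> forward_orbit ?g a" by (metis funpow_in_forward_orbit)
  qed
  then show "forward_orbit f a \<union> forward_orbit f b \<subseteq> forward_orbit ?g a" by blast
  show "forward_orbit ?g a \<subseteq> forward_orbit f a \<union> forward_orbit f b"
  proof (rule forward_orbit_subset)
    fix y assume "y \<in> forward_orbit f a \<union> forward_orbit f b"
    moreover have "a \<in> forward_orbit f a" "b \<in> forward_orbit f b" by (rule self_in_forward_orbit)+
    ultimately have "Transposition.transpose a b y \<in> forward_orbit f a \<union> forward_orbit f b"
      by (auto simp: Transposition.transpose_def)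
    then show "?g y \<in> forward_orbit f a \<union> forward_orbit f b"
      using apply_in_forward_orbit by fastforce
  qed (simp add: self_in_forward_orbit)
qed

lemma card_orbits_comp_transpose_merge:
  assumes f: "perm_on A f" and ab: "a \<in> A" "b \<in> A" "b \<notin> forward_orbit f a"
  shows "card (forward_orbit (f \<circ> Transposition.transpose a b) ` A) + 1 = card (forward_orbit f ` A)"
proof (rule card_image_merge[where a = a and b = b])
  let ?g = "f \<circ> Transposition.transpose a b"
  show "finite A" using f unfolding perm_on_def by simp
  show "forward_orbit f a \<noteq> forward_orbit f b" using ab(3) self_in_forward_orbit by metis
  show "forward_orbit ?g x = forward_orbit f x"
    if "x \<in> A" "x \<notin> forward_orbit f a \<union> forward_orbit f b" for x
    using that forward_orbit_sym[OF f that(1)] by (intro forward_orbit_comp_transpose_avoiding) blast+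
  show "forward_orbit ?g x = forward_orbit f a \<union> forward_orbit f b"
    if "x \<in> A" "x \<in> forward_orbit f a \<union> forward_orbit f b" for x
    using forward_orbit_eq[OF perm_on_comp_transpose[OF f ab(1,2)] ab(1)]
      forward_orbit_comp_transpose_merge[OF f ab] that by auto
  show "a \<in> A" "b \<in> A" using ab by simp_all
  show "x \<in> forward_orbit f x" for x by (rule self_in_forward_orbit)
  show "forward_orbit f y = forward_orbit f x" if "x \<in> A" "y \<in> forward_orbit f x" for x y
    using forward_orbit_eq[OF f] that by blast
qed

lemma not_in_forward_orbit_comp_transpose:
  assumes f: "perm_on A f" and a: "a \<in> A" "a \<noteq> b" and b: "b \<in> forward_orbit f a"
  shows "b \<notin> forward_orbit (f \<circ> Transposition.transpose a b) a"
proof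
  define q where "q = min_period f a"
  note q = min_period[OF f a(1), folded q_def]
  have inj: "i = j" if "i < q" "j < q" "(f ^^ i) a = (f ^^ j) a" for i j
    using min_period_funpow_inj[OF f a(1)] that unfolding q_def by blast
  obtain m where m: "1 \<le> m" "m \<le> q" "b = (f ^^ m) a"
    using forward_orbit_periodic_cases[OF q(2,1) b] .
  have "m < q" using m q(2) a(2) by (cases "m = q") auto
  have shift: "(f ^^ i) (f b) = (f ^^ (m + Suc i)) a" for i
    unfolding m(3) by (simp only: add.commute[of m] funpow_add funpow_Suc_right comp_apply)
  have run: "((f \<circ> Transposition.transpose a b) ^^ Suc j) a = (f ^^ (m + Suc j)) a" if "m + j < q" for j
  proof -
    have "(f ^^ (m + Suc i)) a \<noteq> a" "(f ^^ (m + Suc i)) a \<noteq> b" if "i < j" for i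
      using q(3)[of "m + Suc i"] inj[of "m + Suc i" m] \<open>i < j\<close> \<open>m + j < q\<close> \<open>m < q\<close> m(3)
      by auto
    then have "((f \<circ> Transposition.transpose a b) ^^ Suc j) a = (f ^^ Suc j) b"
      by (intro funpow_Suc_comp_transpose) (simp add: shift)
    then show ?thesis using shift[of j] by (simp add: funpow_swap1)
  qed
  have "((f \<circ> Transposition.transpose a b) ^^ (q - m)) a = a"
    using run[of "q - m - 1"] \<open>m < q\<close> q(2) by (simp add: Suc_diff_Suc)
  moreover assume "b \<in> forward_orbit (f \<circ> Transposition.transpose a b) a"
  ultimately obtain i where i: "1 \<le> i" "i \<le> q - m" "b = ((f \<circ> Transposition.transpose a b) ^^ i) a"
    using forward_orbit_periodic_cases[where N = "q - m" and x = a and y = b] \<open>m < q\<close> by auto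
  then have b_eq: "b = (f ^^ (m + i)) a" using run[of "i - 1"] by simp
  show False
  proof (cases "m + i = q")
    case True
    then show False using q(2) a(2) b_eq by simp
  next
    case False
    then have "m + i < q" using i(2) \<open>m < q\<close> by linarith
    then show False using inj[of m "m + i"] \<open>m < q\<close> m(3) b_eq i(1) by auto
  qed
qed

text \<open>Since \<open>f = (f \<circ> (a b)) \<circ> (a b)\<close>, a split for \<open>f\<close> is a merge for \<open>f \<circ> (a b)\<close>.\<close>

lemma card_orbits_comp_transpose_split:
  assumes f: "perm_on A f" and ab: "a \<in> A" "b \<in> A" "a \<noteq> b" "b \<in> forward_orbit f a"
  shows "card (forward_orbit (f \<circ> Transposition.transpose a b) ` A) = card (forward_orbit f ` A) + 1"
proof -
  let ?g = "f \<circ> Transposition.transpose a b"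
  have "card (forward_orbit (?g \<circ> Transposition.transpose a b) ` A) + 1 = card (forward_orbit ?g ` A)"
    using card_orbits_comp_transpose_merge[OF perm_on_comp_transpose[OF f ab(1,2)] ab(1,2)]
      not_in_forward_orbit_comp_transpose[OF f ab(1,3,4)] by blast
  moreover have "?g \<circ> Transposition.transpose a b = f"
    by (simp add: comp_assoc transpose_comp_involutory)
  ultimately show ?thesis by simp
qed

section \<open>First-return maps and connected components\<close>

lemma funpow_eq_if_avoiding:
  assumes "\<And>y. y \<notin> S \<Longrightarrow> f y = g y" "\<And>i. i < n \<Longrightarrow> (g ^^ i) x \<notin> S"
  shows "(f ^^ n) x = (g ^^ n) x"
  using assms(2) by (induction n) (auto simp: assms(1))

lemma forward_orbit_eq_if_avoiding:
  assumes "\<And>y. y \<notin> S \<Longrightarrow> f y = g y" "forward_orbit g x \<inter> S = {}"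
  shows "forward_orbit f x = forward_orbit g x"
proof -
  have "(f ^^ n) x = (g ^^ n) x" for n
    using assms funpow_in_forward_orbit[where f = g and x = x] by (intro funpow_eq_if_avoiding) blast+
  then show ?thesis unfolding forward_orbit_def by simp
qed

lemma first_return_reaches:
  assumes "g ` B \<subseteq> B"
    and ret: "\<And>x. x \<in> B \<Longrightarrow> \<exists>n>0. g x = (f ^^ n) x \<and> (\<forall>i. 0 < i \<and> i < n \<longrightarrow> (f ^^ i) x \<notin> B)"
  shows "y \<in> B \<Longrightarrow> (f ^^ m) y \<in> B \<Longrightarrow> \<exists>k. (g ^^ k) y = (f ^^ m) y"
proof (induction m arbitrary: y rule: less_induct)
  case (less m)
  show ?case
  proof (cases "m = 0")
    case True
    then show ?thesis by (metis funpow_0)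
  next
    case False
    obtain n where n: "n > 0" "g y = (f ^^ n) y" "\<forall>i. 0 < i \<and> i < n \<longrightarrow> (f ^^ i) y \<notin> B"
      using ret[OF less.prems(1)] by blast
    have "n \<le> m" using n(3) False less.prems(2) by (meson not_less neq0_conv)
    then have "(f ^^ m) y = (f ^^ (m - n)) (g y)" using n(2) funpow_add_apply[of "m - n" n f y] by simp
    moreover have "g y \<in> B" using assms(1) less.prems(1) by blast
    ultimately obtain k where "(g ^^ k) (g y) = (f ^^ m) y"
      using less.IH[of "m - n" "g y"] less.prems(2) n(1) False by auto
    then have "(g ^^ Suc k) y = (f ^^ m) y" by (simp add: funpow_swap1)
    then show ?thesis by blast
  qed
qed

lemma forward_orbit_first_return:
  assumes gB: "g ` B \<subseteq> B"
    and ret: "\<And>x. x \<in> B \<Longrightarrow> \<exists>n>0. g x = (f ^^ n) x \<and> (\<forall>i. 0 < i \<and> i < n \<longrightarrow> (f ^^ i) x \<notin> B)"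
    and x: "x \<in> B"
  shows "forward_orbit g x = forward_orbit f x \<inter> B"
proof
  have "(g ^^ k) x \<in> forward_orbit f x \<inter> B" for k
  proof (induction k)
    case (Suc k)
    have k: "(g ^^ k) x \<in> forward_orbit f x" "(g ^^ k) x \<in> B" using Suc by auto
    obtain n where "g ((g ^^ k) x) = (f ^^ n) ((g ^^ k) x)" using ret[OF k(2)] by blast
    then have "g ((g ^^ k) x) \<in> forward_orbit f ((g ^^ k) x)" by (simp add: funpow_in_forward_orbit)
    then have "g ((g ^^ k) x) \<in> forward_orbit f x" using forward_orbit_trans[OF k(1)] by blast
    then show ?case using gB k(2) by auto
  qed (simp add: x self_in_forward_orbit)
  then show "forward_orbit g x \<subseteq> forward_orbit f x \<inter> B"
    by (auto elim!: forward_orbitE)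
  show "forward_orbit f x \<inter> B \<subseteq> forward_orbit g x"
  proof
    fix y assume "y \<in> forward_orbit f x \<inter> B"
    then obtain m where "(f ^^ m) x = y" "y \<in> B" by (auto elim: forward_orbitE)
    then obtain k where "(g ^^ k) x = y" using first_return_reaches[of g B f, OF gB ret x] by auto
    then show "y \<in> forward_orbit g x" using funpow_in_forward_orbit by metis
  qed
qed

lemma card_forward_orbits_restrict:
  assumes f: "perm_on A f" and "B \<subseteq> A"
  shows "card ((\<lambda>x. forward_orbit f x \<inter> B) ` B) = card (forward_orbit f ` B)"
proof -
  have "inj_on (\<lambda>Z. Z \<inter> B) (forward_orbit f ` B)"
  proof (rule inj_onI)
    fix Z1 Z2 assume "Z1 \<in> forward_orbit f ` B" "Z2 \<in> forward_orbit f ` B" "Z1 \<inter> B = Z2 \<inter> B"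
    then obtain x y where xy: "x \<in> B" "y \<in> B" "Z1 = forward_orbit f x" "Z2 = forward_orbit f y"
      and "Z1 \<inter> B = Z2 \<inter> B" by blast
    then have "x \<in> forward_orbit f y" using self_in_forward_orbit[of x f] by blast
    then show "Z1 = Z2" using forward_orbit_eq[OF f, of y x] xy \<open>B \<subseteq> A\<close> by auto
  qed
  moreover have "(\<lambda>x. forward_orbit f x \<inter> B) ` B = (\<lambda>Z. Z \<inter> B) ` (forward_orbit f ` B)" by auto
  ultimately show ?thesis by (simp add: card_image)
qed

lemma quotient_eq_image: "A // r = (\<lambda>x. r `` {x}) ` A"
  unfolding quotient_def by auto

lemma rtrancl_graph_Image_eq_forward_orbit:
  assumes f: "perm_on P f" and p: "p \<in> P"
  shows "(((\<lambda>q. (q, f q)) ` P \<union> ((\<lambda>q. (q, f q)) ` P)\<inverse>)\<^sup>*) `` {p} = forward_orbit f p"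
proof
  let ?G = "(\<lambda>q. (q, f q)) ` P"
  show "(?G \<union> ?G\<inverse>)\<^sup>* `` {p} \<subseteq> forward_orbit f p"
  proof
    fix y assume "y \<in> (?G \<union> ?G\<inverse>)\<^sup>* `` {p}"
    then have "(p, y) \<in> (?G \<union> ?G\<inverse>)\<^sup>*" by simp
    then show "y \<in> forward_orbit f p"
    proof (induction rule: rtrancl_induct)
      case (step y z)
      from step.hyps(2) show ?case
      proof
        assume "(y, z) \<in> ?G"
        then show ?thesis using apply_in_forward_orbit[OF step.IH] by auto
      next
        assume "(y, z) \<in> ?G\<inverse>"
        then have "z \<in> P" "y = f z" by auto
        then have "forward_orbit f y = forward_orbit f z"
          using forward_orbit_eq[OF f] funpow_in_forward_orbit[where n = 1 and f = f and x = z] by simp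
        then show ?thesis
          using forward_orbit_eq[OF f p step.IH] self_in_forward_orbit[of z f] by simp
      qed
    qed (rule self_in_forward_orbit)
  qed
  show "forward_orbit f p \<subseteq> (?G \<union> ?G\<inverse>)\<^sup>* `` {p}"
  proof
    fix y assume "y \<in> forward_orbit f p"
    then obtain n where y: "y = (f ^^ n) p" by (auto elim: forward_orbitE)
    have "(p, (f ^^ n) p) \<in> (?G \<union> ?G\<inverse>)\<^sup>*" for n
    proof (induction n)
      case (Suc n)
      have "((f ^^ n) p, (f ^^ Suc n) p) \<in> ?G" using perm_on_funpow_closed[OF f p, of n] by auto
      then show ?case using Suc by (meson UnI1 rtrancl.rtrancl_into_rtrancl)
    qed simp
    then show "y \<in> (?G \<union> ?G\<inverse>)\<^sup>* `` {p}" using y by simp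
  qed
qed

lemma rtrancl_Un_clique_iff:
  "(v, w) \<in> (R \<union> {a, b} \<times> {a, b})\<^sup>* \<longleftrightarrow>
     (v, w) \<in> R\<^sup>* \<or> ((v, a) \<in> R\<^sup>* \<or> (v, b) \<in> R\<^sup>*) \<and> ((a, w) \<in> R\<^sup>* \<or> (b, w) \<in> R\<^sup>*)"
  (is "_ \<in> ?R'\<^sup>* \<longleftrightarrow> _")
proof
  assume "(v, w) \<in> ?R'\<^sup>*"
  then show "(v, w) \<in> R\<^sup>* \<or> ((v, a) \<in> R\<^sup>* \<or> (v, b) \<in> R\<^sup>*) \<and> ((a, w) \<in> R\<^sup>* \<or> (b, w) \<in> R\<^sup>*)"
  proof (induction rule: rtrancl_induct)
    case (step y z)
    then show ?case by (auto intro: rtrancl_into_rtrancl)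
  qed simp
next
  have "R\<^sup>* \<subseteq> ?R'\<^sup>*" by (rule rtrancl_mono) blast
  moreover have "(x, y) \<in> ?R'\<^sup>*" if "x \<in> {a, b}" "y \<in> {a, b}" for x y
    using that by blast
  ultimately show "(v, w) \<in> R\<^sup>* \<or> ((v, a) \<in> R\<^sup>* \<or> (v, b) \<in> R\<^sup>*) \<and> ((a, w) \<in> R\<^sup>* \<or> (b, w) \<in> R\<^sup>*)
      \<Longrightarrow> (v, w) \<in> ?R'\<^sup>*"
    by (meson insertCI rtrancl_trans subsetD)
qed

lemma card_quotient_add_clique:
  assumes fin: "finite V" and R: "sym R" and ab: "a \<in> V" "b \<in> V"
  shows "(a, b) \<in> R\<^sup>* \<Longrightarrow> card (V // (R \<union> {a, b} \<times> {a, b})\<^sup>*) = card (V // R\<^sup>*)"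
    and "(a, b) \<notin> R\<^sup>* \<Longrightarrow> card (V // (R \<union> {a, b} \<times> {a, b})\<^sup>*) + 1 = card (V // R\<^sup>*)"
proof -
  let ?R' = "R \<union> {a, b} \<times> {a, b}"
  have sym: "(x, y) \<in> R\<^sup>* \<Longrightarrow> (y, x) \<in> R\<^sup>*" for x y
    using sym_rtrancl[OF R] unfolding sym_def by blast
  show "card (V // ?R'\<^sup>*) = card (V // R\<^sup>*)" if "(a, b) \<in> R\<^sup>*"
  proof -
    have "?R'\<^sup>* = R\<^sup>*" using that sym[OF that] by (intro rtrancl_subset) auto
    then show ?thesis by simp
  qed
  assume nab: "(a, b) \<notin> R\<^sup>*"
  have "card ((\<lambda>v. ?R'\<^sup>* `` {v}) ` V) + 1 = card ((\<lambda>v. R\<^sup>* `` {v}) ` V)"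
  proof (rule card_image_merge[where a = a and b = b])
    show "R\<^sup>* `` {a} \<noteq> R\<^sup>* `` {b}" using nab by blast
    show "R\<^sup>* `` {y} = R\<^sup>* `` {x}" if "y \<in> R\<^sup>* `` {x}" for x y
      using that sym by (auto intro: rtrancl_trans)
    show "?R'\<^sup>* `` {x} = R\<^sup>* `` {x}" if "x \<notin> R\<^sup>* `` {a} \<union> R\<^sup>* `` {b}" for x
      using that sym rtrancl_Un_clique_iff[of x _ R a b] by auto
    show "?R'\<^sup>* `` {x} = R\<^sup>* `` {a} \<union> R\<^sup>* `` {b}" if "x \<in> R\<^sup>* `` {a} \<union> R\<^sup>* `` {b}" for x
      using that sym rtrancl_Un_clique_iff[of x _ R a b] by (auto intro: rtrancl_trans)
  qed (use fin ab in auto)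
  then show "card (V // ?R'\<^sup>*) + 1 = card (V // R\<^sup>*)"
    unfolding quotient_eq_image .
qed

section \<open>Boundary components of ribbon subgraphs\<close>

definition edge_flip :: "('d \<Rightarrow> 'd) \<Rightarrow> 'd set set \<Rightarrow> 'd \<Rightarrow> 'd" where
  "edge_flip \<alpha> F h = (if {h, \<alpha> h} \<in> F then \<alpha> h else h)"

text \<open>The boundary of the ribbon subgraph \<open>F\<close> is traced by leaving a dart along its edge if that
  edge belongs to \<open>F\<close> and then turning to the next dart at the vertex; the orbits of this
  permutation of all darts are the boundary components (isolated vertices excepted).\<close>

definition face_perm :: "('d \<Rightarrow> 'd) \<Rightarrow> ('d \<Rightarrow> 'd) \<Rightarrow> 'd set set \<Rightarrow> 'd \<Rightarrow> 'd" where
  "face_perm \<sigma> \<alpha> F = \<sigma> \<circ> edge_flip \<alpha> F"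

lemma edge_flip_outside: "h \<notin> \<Union>F \<Longrightarrow> edge_flip \<alpha> F h = h"
  unfolding edge_flip_def by auto

locale ribbon =
  fixes V :: "'v set" and D :: "'d set" and vert :: "'d \<Rightarrow> 'v" and \<sigma> \<alpha> :: "'d \<Rightarrow> 'd"
  assumes ribbon_graph: "ribbon_graph V D vert \<sigma> \<alpha>"
begin

lemma
  shows finite_V: "finite V" and finite_D: "finite D" and vert_in_V: "\<And>h. h \<in> D \<Longrightarrow> vert h \<in> V"
    and alpha_in_D: "\<And>h. h \<in> D \<Longrightarrow> \<alpha> h \<in> D" and alpha_neq: "\<And>h. h \<in> D \<Longrightarrow> \<alpha> h \<noteq> h"
    and alpha_alpha: "\<And>h. h \<in> D \<Longrightarrow> \<alpha> (\<alpha> h) = h"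
    and rot_bij: "bij_betw \<sigma> D D" and vert_rot: "\<And>h. h \<in> D \<Longrightarrow> vert (\<sigma> h) = vert h"
    and rot_transitive: "\<And>h h'. h \<in> D \<Longrightarrow> h' \<in> D \<Longrightarrow> vert h = vert h' \<Longrightarrow> \<exists>n. (\<sigma> ^^ n) h = h'"
  using ribbon_graph unfolding ribbon_graph_def bij_betw_def by auto

lemma perm_on_rot: "perm_on D \<sigma>"
  using finite_D rot_bij unfolding perm_on_def bij_betw_def by simp

lemma funpow_rot: "h \<in> D \<Longrightarrow> (\<sigma> ^^ n) h \<in> D \<and> vert ((\<sigma> ^^ n) h) = vert h"
proof (induction n)
  case (Suc n)
  then show ?case using rot_bij vert_rot unfolding bij_betw_def by auto
qed simp

lemma forward_orbit_rot:
  assumes "h \<in> D"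
  shows "forward_orbit \<sigma> h = {g \<in> D. vert g = vert h}"
proof
  show "forward_orbit \<sigma> h \<subseteq> {g \<in> D. vert g = vert h}"
    using funpow_rot[OF assms] by (auto elim!: forward_orbitE)
  show "{g \<in> D. vert g = vert h} \<subseteq> forward_orbit \<sigma> h"
  proof
    fix g assume "g \<in> {g \<in> D. vert g = vert h}"
    then have "g \<in> D" "vert h = vert g" by auto
    then obtain n where "(\<sigma> ^^ n) h = g" using rot_transitive[OF assms] by blast
    then show "g \<in> forward_orbit \<sigma> h" using funpow_in_forward_orbit by metis
  qed
qed

abbreviation edges :: "'d set set" where
  "edges \<equiv> rg_edges D \<alpha>"

lemma finite_edges: "finite edges"
  unfolding rg_edges_def using finite_D by simp

lemma edge_subset: "e \<in> edges \<Longrightarrow> e \<subseteq> D"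
  unfolding rg_edges_def using alpha_in_D by auto

lemma edge_eq: "e \<in> edges \<Longrightarrow> h \<in> e \<Longrightarrow> e = {h, \<alpha> h}"
  unfolding rg_edges_def using alpha_alpha by auto

lemma edge_in_edges: "h \<in> D \<Longrightarrow> {h, \<alpha> h} \<in> edges"
  unfolding rg_edges_def by auto

lemma edge_alpha: "h \<in> D \<Longrightarrow> {\<alpha> h, \<alpha> (\<alpha> h)} = {h, \<alpha> h}"
  using alpha_alpha by auto

lemma mem_Union_edges_iff: "F \<subseteq> edges \<Longrightarrow> h \<in> D \<Longrightarrow> h \<in> \<Union>F \<longleftrightarrow> {h, \<alpha> h} \<in> F"
  using edge_eq by blast

lemma Union_edges_subset: "F \<subseteq> edges \<Longrightarrow> \<Union>F \<subseteq> D"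
  using edge_subset by blast

lemma alpha_in_Union: "F \<subseteq> edges \<Longrightarrow> h \<in> \<Union>F \<Longrightarrow> \<alpha> h \<in> \<Union>F"
  using mem_Union_edges_iff Union_edges_subset by blast

lemma edge_flip_in_D: "h \<in> D \<Longrightarrow> edge_flip \<alpha> F h \<in> D"
  unfolding edge_flip_def using alpha_in_D by auto

lemma edge_flip_edge_flip:
  assumes "h \<in> D"
  shows "edge_flip \<alpha> F (edge_flip \<alpha> F h) = h"
proof (cases "{h, \<alpha> h} \<in> F")
  case True
  then show ?thesis using edge_alpha[OF assms] alpha_alpha[OF assms] unfolding edge_flip_def by simp
qed (simp add: edge_flip_def)

lemma edge_flip_in_Union:
  assumes "F \<subseteq> edges" "h \<in> \<Union>F"
  shows "edge_flip \<alpha> F h = \<alpha> h"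
proof -
  have "h \<in> D" using assms Union_edges_subset by blast
  then have "{h, \<alpha> h} \<in> F" using mem_Union_edges_iff[OF assms(1)] assms(2) by simp
  then show ?thesis unfolding edge_flip_def by simp
qed

lemma perm_on_face_perm: "perm_on D (face_perm \<sigma> \<alpha> F)"
proof -
  have "inj_on (edge_flip \<alpha> F) D"
    by (metis edge_flip_edge_flip inj_onI)
  moreover have "edge_flip \<alpha> F ` D \<subseteq> D" using edge_flip_in_D by blast
  ultimately show ?thesis
    using perm_on_rot unfolding perm_on_def face_perm_def
    by (auto intro: comp_inj_on inj_on_subset)
qed

lemma face_perm_insert_edge:
  assumes h: "h \<in> D" and new: "{h, \<alpha> h} \<notin> F"
  shows "face_perm \<sigma> \<alpha> (insert {h, \<alpha> h} F) = face_perm \<sigma> \<alpha> F \<circ> Transposition.transpose h (\<alpha> h)"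
proof
  fix x
  have "\<alpha> h \<noteq> h" "\<alpha> (\<alpha> h) = h" "{\<alpha> h, h} = {h, \<alpha> h}" using alpha_neq[OF h] alpha_alpha[OF h] by auto
  moreover have "{x, \<alpha> x} \<noteq> {h, \<alpha> h}" if "x \<noteq> h" "x \<noteq> \<alpha> h"
    using that by auto
  ultimately show "face_perm \<sigma> \<alpha> (insert {h, \<alpha> h} F) x = (face_perm \<sigma> \<alpha> F \<circ> Transposition.transpose h (\<alpha> h)) x"
    using new unfolding face_perm_def edge_flip_def
    by (cases "x = h"; cases "x = \<alpha> h") (simp_all add: transpose_apply_other)
qed


lemma face_perm_eq_rot_outside: "h \<notin> \<Union>F \<Longrightarrow> face_perm \<sigma> \<alpha> F h = \<sigma> h"
  by (simp add: face_perm_def edge_flip_outside)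

lemma induced_rot_first_return:
  assumes "S \<subseteq> D" "y \<in> S"
  obtains N where "0 < N" "induced_rot \<sigma> S y = (\<sigma> ^^ N) y" "(\<sigma> ^^ N) y \<in> S"
    "\<And>i. 0 < i \<Longrightarrow> i < N \<Longrightarrow> (\<sigma> ^^ i) y \<notin> S"
proof -
  define N where "N = (LEAST n. 0 < n \<and> (\<sigma> ^^ n) y \<in> S)"
  obtain p where "p > 0" "(\<sigma> ^^ p) y = y" using perm_on_periodic[OF perm_on_rot] assms by blast
  then have "0 < p \<and> (\<sigma> ^^ p) y \<in> S" using assms(2) by simp
  then have "0 < N \<and> (\<sigma> ^^ N) y \<in> S" unfolding N_def by (rule LeastI)
  moreover have "(\<sigma> ^^ i) y \<notin> S" if "0 < i" "i < N" for i
    using not_less_Least[of i "\<lambda>n. 0 < n \<and> (\<sigma> ^^ n) y \<in> S"] that unfolding N_def by blast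
  ultimately show thesis using that[of N] unfolding induced_rot_def N_def by blast
qed

text \<open>\<open>induced_rot \<sigma> (\<Union>F) \<circ> \<alpha>\<close> is the permutation whose orbits \<open>rg_bc\<close> counts.\<close>

lemma face_perm_first_return:
  assumes F: "F \<subseteq> edges" and x: "x \<in> \<Union>F"
  shows "\<exists>n>0. (induced_rot \<sigma> (\<Union>F) \<circ> \<alpha>) x = (face_perm \<sigma> \<alpha> F ^^ n) x
                \<and> (\<forall>i. 0 < i \<and> i < n \<longrightarrow> (face_perm \<sigma> \<alpha> F ^^ i) x \<notin> \<Union>F)"
proof -
  let ?f = "face_perm \<sigma> \<alpha> F"
  obtain N where N: "0 < N" "induced_rot \<sigma> (\<Union>F) (\<alpha> x) = (\<sigma> ^^ N) (\<alpha> x)"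
    "\<And>i. 0 < i \<Longrightarrow> i < N \<Longrightarrow> (\<sigma> ^^ i) (\<alpha> x) \<notin> \<Union>F"
    using induced_rot_first_return[OF Union_edges_subset[OF F] alpha_in_Union[OF F x]] by blast
  have run: "(?f ^^ Suc i) x = (\<sigma> ^^ Suc i) (\<alpha> x)" if "i < N" for i
  proof -
    have "(?f ^^ i) (\<sigma> (\<alpha> x)) = (\<sigma> ^^ i) (\<sigma> (\<alpha> x))"
    proof (rule funpow_eq_if_avoiding[where S = "\<Union>F"])
      show "(\<sigma> ^^ j) (\<sigma> (\<alpha> x)) \<notin> \<Union>F" if "j < i" for j
        using N(3)[of "Suc j"] that \<open>i < N\<close> by (simp add: funpow_swap1)
    qed (rule face_perm_eq_rot_outside)
    moreover have "?f x = \<sigma> (\<alpha> x)" using edge_flip_in_Union[OF F x] by (simp add: face_perm_def)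
    ultimately show ?thesis by (simp add: funpow_swap1)
  qed
  show ?thesis
  proof (intro exI conjI allI impI)
    show "(induced_rot \<sigma> (\<Union>F) \<circ> \<alpha>) x = (?f ^^ N) x" using run[of "N - 1"] N(1,2) by simp
    show "(?f ^^ i) x \<notin> \<Union>F" if i: "0 < i \<and> i < N" for i
    proof -
      obtain j where "i = Suc j" using i gr0_implies_Suc by blast
      then show ?thesis using run[of j] N(3)[of i] i by simp
    qed
  qed (rule N(1))
qed

lemma card_face_classes:
  assumes F: "F \<subseteq> edges"
  shows "card (\<Union>F // {(h, h'). h \<in> \<Union>F \<and> h' \<in> \<Union>F \<and> (\<exists>n. ((induced_rot \<sigma> (\<Union>F) \<circ> \<alpha>) ^^ n) h = h')})
           = card (forward_orbit (face_perm \<sigma> \<alpha> F) ` \<Union>F)"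
    (is "card (_ // ?R) = _")
proof -
  let ?g = "induced_rot \<sigma> (\<Union>F) \<circ> \<alpha>" and ?f = "face_perm \<sigma> \<alpha> F"
  have g: "?g ` \<Union>F \<subseteq> \<Union>F"
  proof
    fix y assume "y \<in> ?g ` \<Union>F"
    then obtain x where "x \<in> \<Union>F" "y = induced_rot \<sigma> (\<Union>F) (\<alpha> x)" by auto
    then show "y \<in> \<Union>F"
      using induced_rot_first_return[OF Union_edges_subset[OF F] alpha_in_Union[OF F]] by metis
  qed
  have "?R `` {h} = forward_orbit ?f h \<inter> \<Union>F" if h: "h \<in> \<Union>F" for h
  proof -
    have "(?g ^^ n) h \<in> \<Union>F" for n
      using funpow_closed[of h "\<Union>F" ?g] h g by blast
    then have "?R `` {h} = forward_orbit ?g h"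
      using h unfolding forward_orbit_def by auto
    also have "\<dots> = forward_orbit ?f h \<inter> \<Union>F"
      by (rule forward_orbit_first_return[OF g face_perm_first_return[OF F] h])
    finally show ?thesis .
  qed
  then have "\<Union>F // ?R = (\<lambda>h. forward_orbit ?f h \<inter> \<Union>F) ` \<Union>F"
    unfolding quotient_eq_image by simp
  then show ?thesis
    using card_forward_orbits_restrict[OF perm_on_face_perm Union_edges_subset[OF F]] by simp
qed


lemma forward_orbit_face_perm_avoiding:
  assumes "x \<in> D" "forward_orbit (face_perm \<sigma> \<alpha> F) x \<inter> \<Union>F = {}"
  shows "forward_orbit (face_perm \<sigma> \<alpha> F) x = {g \<in> D. vert g = vert x}"
proof -
  have "forward_orbit \<sigma> x = forward_orbit (face_perm \<sigma> \<alpha> F) x"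
    by (rule forward_orbit_eq_if_avoiding[OF _ assms(2)]) (simp add: face_perm_eq_rot_outside)
  then show ?thesis using forward_orbit_rot[OF assms(1)] by simp
qed

lemma vert_face_orbits_avoiding:
  assumes F: "F \<subseteq> edges"
  shows "vert ` {x \<in> D. forward_orbit (face_perm \<sigma> \<alpha> F) x \<inter> \<Union>F = {}}
           = {v \<in> vert ` D. \<forall>h\<in>\<Union>F. vert h \<noteq> v}"
proof (intro equalityI subsetI)
  fix v assume "v \<in> vert ` {x \<in> D. forward_orbit (face_perm \<sigma> \<alpha> F) x \<inter> \<Union>F = {}}"
  then obtain x where x: "x \<in> D" "forward_orbit (face_perm \<sigma> \<alpha> F) x \<inter> \<Union>F = {}" "v = vert x"
    by blast
  then have "{g \<in> D. vert g = v} \<inter> \<Union>F = {}" using forward_orbit_face_perm_avoiding by simp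
  then show "v \<in> {v \<in> vert ` D. \<forall>h\<in>\<Union>F. vert h \<noteq> v}"
    using x Union_edges_subset[OF F] by blast
next
  fix v assume "v \<in> {v \<in> vert ` D. \<forall>h\<in>\<Union>F. vert h \<noteq> v}"
  then obtain x where x: "x \<in> D" "v = vert x" "\<forall>h\<in>\<Union>F. vert h \<noteq> v" by blast
  then have avoid: "forward_orbit \<sigma> x \<inter> \<Union>F = {}" using forward_orbit_rot by auto
  have "forward_orbit (face_perm \<sigma> \<alpha> F) x = forward_orbit \<sigma> x"
    by (rule forward_orbit_eq_if_avoiding[OF _ avoid]) (rule face_perm_eq_rot_outside)
  then show "v \<in> vert ` {x \<in> D. forward_orbit (face_perm \<sigma> \<alpha> F) x \<inter> \<Union>F = {}}"
    using x avoid by blast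
qed

lemma card_face_orbits:
  assumes F: "F \<subseteq> edges"
  shows "card (forward_orbit (face_perm \<sigma> \<alpha> F) ` D)
           = card (forward_orbit (face_perm \<sigma> \<alpha> F) ` \<Union>F) + card {v \<in> vert ` D. \<forall>h\<in>\<Union>F. vert h \<noteq> v}"
proof -
  let ?f = "face_perm \<sigma> \<alpha> F"
  define NN where "NN = {x \<in> D. forward_orbit ?f x \<inter> \<Union>F = {}}"
  have S: "\<Union>F \<subseteq> D" by (rule Union_edges_subset[OF F])
  have "forward_orbit ?f ` D = forward_orbit ?f ` \<Union>F \<union> forward_orbit ?f ` NN"
  proof (intro equalityI subsetI)
    fix Z assume "Z \<in> forward_orbit ?f ` D"
    then obtain x where x: "x \<in> D" "Z = forward_orbit ?f x" by blast
    show "Z \<in> forward_orbit ?f ` \<Union>F \<union> forward_orbit ?f ` NN"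
    proof (cases "forward_orbit ?f x \<inter> \<Union>F = {}")
      case False
      then obtain y where y: "y \<in> forward_orbit ?f x" "y \<in> \<Union>F" by blast
      then have "Z = forward_orbit ?f y" using forward_orbit_eq[OF perm_on_face_perm x(1) y(1)] x(2) by simp
      then show ?thesis using y(2) by blast
    qed (use x in \<open>simp add: NN_def\<close>)
  qed (use S in \<open>auto simp: NN_def\<close>)
  moreover have "forward_orbit ?f y \<noteq> forward_orbit ?f x" if "y \<in> \<Union>F" "x \<in> NN" for x y
    using that self_in_forward_orbit[of y ?f] unfolding NN_def by blast
  then have "forward_orbit ?f ` \<Union>F \<inter> forward_orbit ?f ` NN = {}" by blast
  moreover have "finite (\<Union>F)" "finite NN"
    using finite_D S finite_subset unfolding NN_def by auto
  ultimately have "card (forward_orbit ?f ` D) = card (forward_orbit ?f ` \<Union>F) + card (forward_orbit ?f ` NN)"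
    by (simp add: card_Un_disjoint)
  moreover have "forward_orbit ?f ` NN = (\<lambda>x. {g \<in> D. vert g = vert x}) ` NN"
    by (rule image_cong) (use forward_orbit_face_perm_avoiding in \<open>auto simp: NN_def\<close>)
  then have "forward_orbit ?f ` NN = (\<lambda>v. {g \<in> D. vert g = v}) ` vert ` NN"
    by (simp add: image_image)
  moreover have "inj_on (\<lambda>v. {g \<in> D. vert g = v}) (vert ` NN)"
    unfolding NN_def by (rule inj_onI) blast
  ultimately show ?thesis
    using vert_face_orbits_avoiding[OF F] unfolding NN_def by (simp add: card_image)
qed

text \<open>Vertices without darts carry no orbit of the face permutation; they are counted by
  \<open>med_loops\<close>.\<close>

theorem rg_bc_eq_card_face_orbits:
  assumes F: "F \<subseteq> edges"
  shows "rg_bc V vert \<sigma> \<alpha> F = card (forward_orbit (face_perm \<sigma> \<alpha> F) ` D) + med_loops V D vert"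
proof -
  let ?W = "{v \<in> vert ` D. \<forall>h\<in>\<Union>F. vert h \<noteq> v}" and ?L = "{v \<in> V. \<forall>h\<in>D. vert h \<noteq> v}"
  have "{v \<in> V. \<forall>h\<in>\<Union>F. vert h \<noteq> v} = ?W \<union> ?L" "?W \<inter> ?L = {}"
    using Union_edges_subset[OF F] vert_in_V by blast+
  moreover have "finite ?W" "finite ?L" using finite_D finite_V by auto
  ultimately have "card {v \<in> V. \<forall>h\<in>\<Union>F. vert h \<noteq> v} = card ?W + med_loops V D vert"
    unfolding med_loops_def by (simp add: card_Un_disjoint)
  then show ?thesis
    using card_face_orbits[OF F] card_face_classes[OF F] unfolding rg_bc_def Let_def by simp
qed


section \<open>Genus of spanning subgraphs\<close>

abbreviation adj :: "'d set set \<Rightarrow> ('v \<times> 'v) set" where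
  "adj F \<equiv> {(u, w). \<exists>e\<in>F. u \<in> vert ` e \<and> w \<in> vert ` e}"

lemma rg_k_eq_card_quotient: "rg_k V vert F = card (V // (adj F)\<^sup>*)"
  unfolding rg_k_def gr_components_def by simp

lemma rg_k_le: "rg_k V vert F \<le> card V"
  unfolding rg_k_eq_card_quotient quotient_eq_image using card_image_le[OF finite_V] by blast

lemma rg_k_empty: "rg_k V vert {} = card V"
proof -
  have "V // (adj {})\<^sup>* = (\<lambda>v. {v}) ` V" unfolding quotient_eq_image by simp
  then show ?thesis unfolding rg_k_eq_card_quotient by (simp add: card_image)
qed

lemma rg_k_insert_edge:
  assumes h: "h \<in> D"
  shows "(vert h, vert (\<alpha> h)) \<in> (adj F)\<^sup>* \<Longrightarrow> rg_k V vert (insert {h, \<alpha> h} F) = rg_k V vert F"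
    and "(vert h, vert (\<alpha> h)) \<notin> (adj F)\<^sup>* \<Longrightarrow> rg_k V vert (insert {h, \<alpha> h} F) + 1 = rg_k V vert F"
proof -
  have adj_insert: "adj (insert {h, \<alpha> h} F) = adj F \<union> {vert h, vert (\<alpha> h)} \<times> {vert h, vert (\<alpha> h)}"
    by auto
  have "sym (adj F)" unfolding sym_def by blast
  note card_quotient_add_clique[OF finite_V this vert_in_V[OF h] vert_in_V[OF alpha_in_D[OF h]]]
  then show "(vert h, vert (\<alpha> h)) \<in> (adj F)\<^sup>* \<Longrightarrow> rg_k V vert (insert {h, \<alpha> h} F) = rg_k V vert F"
    and "(vert h, vert (\<alpha> h)) \<notin> (adj F)\<^sup>* \<Longrightarrow> rg_k V vert (insert {h, \<alpha> h} F) + 1 = rg_k V vert F"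
    unfolding rg_k_eq_card_quotient adj_insert by simp_all
qed

lemma rg_k_insert_edge_le:
  assumes "e \<in> edges"
  shows "rg_k V vert (insert e F) \<le> rg_k V vert F"
proof -
  obtain h where h: "h \<in> D" "e = {h, \<alpha> h}" using assms unfolding rg_edges_def by blast
  show ?thesis
    using rg_k_insert_edge[OF h(1), of F] unfolding h(2)
    by (cases "(vert h, vert (\<alpha> h)) \<in> (adj F)\<^sup>*") simp_all
qed

lemma vert_face_perm_connected:
  assumes "x \<in> D"
  shows "(vert x, vert (face_perm \<sigma> \<alpha> F x)) \<in> (adj F)\<^sup>*"
proof -
  have "vert (face_perm \<sigma> \<alpha> F x) = vert (edge_flip \<alpha> F x)"
    using vert_rot edge_flip_in_D[OF assms] by (simp add: face_perm_def)
  moreover have "(vert x, vert (edge_flip \<alpha> F x)) \<in> (adj F)\<^sup>*"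
  proof (cases "{x, \<alpha> x} \<in> F")
    case True
    then have "(vert x, vert (\<alpha> x)) \<in> adj F" by (intro CollectI case_prodI bexI[of _ "{x, \<alpha> x}"]) auto
    then show ?thesis using True unfolding edge_flip_def by auto
  qed (simp add: edge_flip_def)
  ultimately show ?thesis by simp
qed

lemma vert_funpow_face_perm_connected:
  assumes "x \<in> D"
  shows "(vert x, vert ((face_perm \<sigma> \<alpha> F ^^ n) x)) \<in> (adj F)\<^sup>*"
proof (induction n)
  case (Suc n)
  have "(face_perm \<sigma> \<alpha> F ^^ n) x \<in> D" by (rule perm_on_funpow_closed[OF perm_on_face_perm assms])
  then show ?case
    using Suc vert_face_perm_connected by (auto intro: rtrancl_trans)
qed simp

lemma card_face_orbits_insert_edge:
  assumes h: "h \<in> D" and new: "{h, \<alpha> h} \<notin> F"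
  defines "c F' \<equiv> card (forward_orbit (face_perm \<sigma> \<alpha> F') ` D)"
  shows "(vert h, vert (\<alpha> h)) \<notin> (adj F)\<^sup>* \<Longrightarrow> c (insert {h, \<alpha> h} F) + 1 = c F"
    and "c (insert {h, \<alpha> h} F) = c F + 1 \<or> c (insert {h, \<alpha> h} F) + 1 = c F"
proof -
  note perm = perm_on_face_perm[of F] and ab = h alpha_in_D[OF h]
  have merge: "\<alpha> h \<notin> forward_orbit (face_perm \<sigma> \<alpha> F) h \<Longrightarrow> c (insert {h, \<alpha> h} F) + 1 = c F"
    unfolding c_def face_perm_insert_edge[OF h new] using card_orbits_comp_transpose_merge[OF perm ab] .
  have split: "\<alpha> h \<in> forward_orbit (face_perm \<sigma> \<alpha> F) h \<Longrightarrow> c (insert {h, \<alpha> h} F) = c F + 1"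
    unfolding c_def face_perm_insert_edge[OF h new]
    using card_orbits_comp_transpose_split[OF perm ab alpha_neq[OF h, symmetric]] .
  show "c (insert {h, \<alpha> h} F) + 1 = c F" if "(vert h, vert (\<alpha> h)) \<notin> (adj F)\<^sup>*"
  proof (rule merge)
    show "\<alpha> h \<notin> forward_orbit (face_perm \<sigma> \<alpha> F) h"
    proof
      assume "\<alpha> h \<in> forward_orbit (face_perm \<sigma> \<alpha> F) h"
      then obtain n where "\<alpha> h = (face_perm \<sigma> \<alpha> F ^^ n) h" by (auto elim: forward_orbitE)
      then show False using that vert_funpow_face_perm_connected[OF h, of n F] by simp
    qed
  qed
  show "c (insert {h, \<alpha> h} F) = c F + 1 \<or> c (insert {h, \<alpha> h} F) + 1 = c F"
    using merge split by blast
qed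


lemma rg_r_eq: "rg_r V vert F = card V - rg_k V vert F"
  unfolding rg_r_def rg_k_def gr_rank_def ..

lemma rg_r_int: "int (rg_r V vert F) = int (card V) - int (rg_k V vert F)"
  using rg_k_le[of F] unfolding rg_r_eq by simp

lemma card_V_le_rg_k_plus_card:
  assumes "F \<subseteq> edges"
  shows "card V \<le> rg_k V vert F + card F"
proof -
  have "finite F" using assms finite_edges finite_subset by blast
  then show ?thesis using assms
  proof (induction rule: finite_induct)
    case (insert e F)
    obtain h where h: "h \<in> D" "e = {h, \<alpha> h}" using insert.prems unfolding rg_edges_def by blast
    have "rg_k V vert F \<le> rg_k V vert (insert e F) + 1"
      using rg_k_insert_edge[OF h(1), of F] unfolding h(2)
      by (cases "(vert h, vert (\<alpha> h)) \<in> (adj F)\<^sup>*") simp_all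
    then show ?case using insert by simp
  qed (simp add: rg_k_empty)
qed

lemma rg_n_int:
  assumes "F \<subseteq> edges"
  shows "int (rg_n V vert F) = int (card F) - int (card V) + int (rg_k V vert F)"
  using card_V_le_rg_k_plus_card[OF assms] rg_k_le[of F]
  unfolding rg_n_def gr_nullity_def rg_r_def[symmetric] rg_r_eq by linarith

definition double_genus :: "'d set set \<Rightarrow> int" where
  "double_genus F = int (rg_k V vert F) - int (rg_bc V vert \<sigma> \<alpha> F) + int (rg_n V vert F)"

lemma double_genus_empty: "double_genus {} = 0"
proof -
  have "rg_bc V vert \<sigma> \<alpha> {} = card V" unfolding rg_bc_def by simp
  then show ?thesis using rg_n_int[of "{}"] unfolding double_genus_def rg_k_empty by simp
qed

lemma double_genus_insert_edge:
  assumes F: "F \<subseteq> edges" and e: "e \<in> edges" "e \<notin> F"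
  shows "double_genus (insert e F) = double_genus F \<or> double_genus (insert e F) = double_genus F + 2"
proof -
  obtain h where h: "h \<in> D" "e = {h, \<alpha> h}" using e unfolding rg_edges_def by blast
  let ?c = "\<lambda>F. card (forward_orbit (face_perm \<sigma> \<alpha> F) ` D)"
  have dg: "double_genus G = 2 * int (rg_k V vert G) - int (?c G) - int (med_loops V D vert)
                             + int (card G) - int (card V)" if "G \<subseteq> edges" for G
    using rg_bc_eq_card_face_orbits[OF that] rg_n_int[OF that] unfolding double_genus_def by simp
  have card: "card (insert e F) = card F + 1"
    using e(2) finite_subset[OF F finite_edges] by simp
  have new: "{h, \<alpha> h} \<notin> F" using e(2) h(2) by simp
  note dg_F = dg[OF F] and dg_eF = dg[of "insert e F"]
  note k = rg_k_insert_edge[OF h(1), of F] and c = card_face_orbits_insert_edge[OF h(1) new]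
  show ?thesis
  proof (cases "(vert h, vert (\<alpha> h)) \<in> (adj F)\<^sup>*")
    case True
    then show ?thesis using k(1) c(2) dg_F dg_eF card F e(1) unfolding h(2) by auto
  next
    case False
    then show ?thesis using k(2) c(1) dg_F dg_eF card F e(1) unfolding h(2) by auto
  qed
qed

lemma mono_on_edge_subsets:
  fixes P :: "'d set set \<Rightarrow> 'a::order"
  assumes step: "\<And>F e. F \<subseteq> edges \<Longrightarrow> e \<in> edges \<Longrightarrow> e \<notin> F \<Longrightarrow> P F \<le> P (insert e F)"
    and "F \<subseteq> G" "G \<subseteq> edges"
  shows "P F \<le> P G"
proof -
  have "P F \<le> P (F \<union> H)" if "finite H" "H \<subseteq> G - F" for H
    using that
  proof (induction rule: finite_induct)
    case (insert e H)
    then have "P (F \<union> H) \<le> P (insert e (F \<union> H))" using assms by (intro step) auto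
    then show ?case using insert by (auto intro: order_trans)
  qed simp
  moreover have "finite (G - F)" using assms finite_edges finite_subset by blast
  moreover have "F \<union> (G - F) = G" using \<open>F \<subseteq> G\<close> by blast
  ultimately show ?thesis by (metis order_refl)
qed

lemma double_genus_mono:
  assumes "F \<subseteq> G" "G \<subseteq> edges"
  shows "double_genus F \<le> double_genus G"
proof (rule mono_on_edge_subsets[OF _ assms])
  show "double_genus F' \<le> double_genus (insert e F')" if "F' \<subseteq> edges" "e \<in> edges" "e \<notin> F'" for F' e
    using double_genus_insert_edge[OF that] by linarith
qed

lemma double_genus_nonneg: "F \<subseteq> edges \<Longrightarrow> 0 \<le> double_genus F"
  using double_genus_mono[of "{}" F] double_genus_empty by simp

lemma even_double_genus:
  assumes "F \<subseteq> edges"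
  shows "even (double_genus F)"
proof -
  have "finite F" using assms finite_edges finite_subset by blast
  then show ?thesis using assms
  proof (induction rule: finite_induct)
    case (insert e F)
    then show ?case using double_genus_insert_edge[of F e] by auto
  qed (simp add: double_genus_empty)
qed

lemma double_genus_eq_0_if_genus_0:
  assumes "rg_genus V D vert \<sigma> \<alpha> = 0" "F \<subseteq> edges"
  shows "double_genus F = 0"
proof -
  have "double_genus edges div 2 = 0"
    using assms(1) unfolding rg_genus_def double_genus_def Let_def by simp
  moreover have "0 \<le> double_genus edges" "even (double_genus edges)"
    using double_genus_nonneg[of edges] even_double_genus[of edges] by simp_all
  ultimately have "double_genus edges = 0" by fastforce
  then show ?thesis
    using double_genus_mono[OF assms(2)] double_genus_nonneg[OF assms(2)] by simp
qed

lemma rg_r_mono: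
  assumes "F \<subseteq> G" "G \<subseteq> edges"
  shows "rg_r V vert F \<le> rg_r V vert G"
proof (rule mono_on_edge_subsets[OF _ assms])
  show "rg_r V vert F' \<le> rg_r V vert (insert e F')" if "e \<in> edges" for F' e
    unfolding rg_r_eq using rg_k_insert_edge_le[OF that] by (rule diff_le_mono2)
qed

end

section \<open>States of the medial diagram\<close>

text \<open>The state \<open>S\<close> (the crossings with an \<open>A\<close>-splitting) corresponds to the spanning subgraph of
  the positive edges split by \<open>A\<close> and the negative edges split by \<open>B\<close>.\<close>

definition state_subgraph :: "'d set set \<Rightarrow> ('d set \<Rightarrow> bool) \<Rightarrow> 'd set set \<Rightarrow> 'd set set" where
  "state_subgraph E pos S = {e \<in> E. pos e = (e \<in> S)}"

lemma state_subgraph_subset: "state_subgraph E pos S \<subseteq> E"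
  unfolding state_subgraph_def by blast

lemma state_subgraph_state_subgraph: "F \<subseteq> E \<Longrightarrow> state_subgraph E pos (state_subgraph E pos F) = F"
  unfolding state_subgraph_def by blast

lemma bij_betw_state_subgraph: "bij_betw (state_subgraph E pos) (Pow E) (Pow E)"
  by (rule bij_betw_byWitness[where f' = "state_subgraph E pos"])
    (auto simp: state_subgraph_state_subgraph state_subgraph_def)

lemma card_state_subgraph:
  assumes "finite E" "F \<subseteq> E"
  shows "int (card (state_subgraph E pos F)) = int (card F) - int (neg_count pos F) + int (neg_count pos (E - F))"
proof -
  have fin: "finite F" "finite (E - F)" using assms finite_subset by auto
  have "state_subgraph E pos F = {e \<in> F. pos e} \<union> {e \<in> E - F. \<not> pos e}"
    unfolding state_subgraph_def using assms(2) by auto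
  then have "card (state_subgraph E pos F) = card {e \<in> F. pos e} + card {e \<in> E - F. \<not> pos e}"
    using fin by (simp add: card_Un_disjoint disjoint_iff)
  moreover have "{e \<in> F. \<not> pos e} = F - {e \<in> F. pos e}" by blast
  then have "card {e \<in> F. \<not> pos e} = card F - card {e \<in> F. pos e}"
    using fin(1) by (simp add: card_Diff_subset)
  moreover have "card {e \<in> F. pos e} \<le> card F" using fin(1) by (simp add: card_mono)
  ultimately show ?thesis unfolding neg_count_def by simp
qed

text \<open>Walking along the state curve of \<open>S\<close>: an arc leads from port \<open>(h, True)\<close> to \<open>(\<sigma> h, False)\<close>,
  and the smoothing at the crossing of \<open>h\<close> leads on to the port of the flipped dart.\<close>

definition medial_walk :: "('d \<Rightarrow> 'd) \<Rightarrow> ('d \<Rightarrow> 'd) \<Rightarrow> 'd set set \<Rightarrow> 'd \<times> bool \<Rightarrow> 'd \<times> bool" where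
  "medial_walk \<sigma> \<alpha> F p = (if snd p then (\<sigma> (fst p), False) else (edge_flip \<alpha> F (fst p), True))"

context ribbon
begin

lemma edge_med_dart:
  assumes "e \<in> edges"
  shows "med_dart e \<in> D" "e = {med_dart e, \<alpha> (med_dart e)}"
proof -
  have "\<exists>h. h \<in> e" using assms unfolding rg_edges_def by auto
  then have "med_dart e \<in> e" unfolding med_dart_def by (rule someI_ex)
  then show "med_dart e \<in> D" "e = {med_dart e, \<alpha> (med_dart e)}"
    using edge_subset[OF assms] edge_eq[OF assms] by auto
qed

lemma med_port_simps:
  "med_port \<alpha> pos e 0 = (if pos e then (med_dart e, True) else (\<alpha> (med_dart e), False))"
  "med_port \<alpha> pos e 1 = (if pos e then (med_dart e, False) else (med_dart e, True))"
  "med_port \<alpha> pos e 2 = (if pos e then (\<alpha> (med_dart e), True) else (med_dart e, False))"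
  "med_port \<alpha> pos e 3 = (if pos e then (\<alpha> (med_dart e), False) else (\<alpha> (med_dart e), True))"
  by (simp_all add: med_port_def Let_def numeral_eq_Suc)

lemma diag_ports_medial: "diag_ports edges (med_port \<alpha> pos) = D \<times> UNIV"
proof -
  have "med_port \<alpha> pos e ` {0..3} = e \<times> UNIV" if "e \<in> edges" for e
  proof -
    define m where "m = med_dart e"
    have "{0..3::nat} = {0, 1, 2, 3}" by auto
    then have "med_port \<alpha> pos e ` {0..3} = {(m, True), (m, False), (\<alpha> m, True), (\<alpha> m, False)}"
      by (cases "pos e") (auto simp: med_port_simps med_port_simps(2)[unfolded One_nat_def] m_def[symmetric])
    also have "\<dots> = {m, \<alpha> m} \<times> UNIV" by (auto simp: UNIV_bool)
    also have "\<dots> = e \<times> UNIV" using edge_med_dart(2)[OF that, folded m_def] by simp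
    finally show ?thesis .
  qed
  then have "diag_ports edges (med_port \<alpha> pos) = (\<Union>e\<in>edges. e \<times> UNIV)"
    unfolding diag_ports_def by simp
  also have "\<dots> = D \<times> UNIV" using edge_subset edge_in_edges by blast
  finally show ?thesis .
qed

lemma perm_on_medial_walk: "perm_on (D \<times> UNIV) (medial_walk \<sigma> \<alpha> F)"
proof -
  have "(h, b) = (k, c)"
    if hk: "h \<in> D" "k \<in> D" and eq: "medial_walk \<sigma> \<alpha> F (h, b) = medial_walk \<sigma> \<alpha> F (k, c)" for h b k c
  proof -
    have "b = c" using eq by (simp add: medial_walk_def split: if_splits)
    moreover have "h = k"
    proof (cases b)
      case True
      then have "\<sigma> h = \<sigma> k" using eq \<open>b = c\<close> by (simp add: medial_walk_def)
      then show ?thesis using rot_bij hk unfolding bij_betw_def by (blast dest: inj_onD)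
    next
      case False
      then have "edge_flip \<alpha> F h = edge_flip \<alpha> F k" using eq \<open>b = c\<close> by (simp add: medial_walk_def)
      then show ?thesis using edge_flip_edge_flip hk by metis
    qed
    ultimately show ?thesis by simp
  qed
  then have "inj_on (medial_walk \<sigma> \<alpha> F) (D \<times> UNIV)" by (intro inj_onI) auto
  moreover have "medial_walk \<sigma> \<alpha> F ` (D \<times> UNIV) \<subseteq> D \<times> UNIV"
    using rot_bij edge_flip_in_D unfolding medial_walk_def bij_betw_def by auto
  ultimately show ?thesis using finite_D unfolding perm_on_def by simp
qed


lemma graph_med_arc:
  "(\<lambda>p. (p, med_arc D \<sigma> p)) ` (D \<times> UNIV)
     = (\<lambda>h. ((h, True), (\<sigma> h, False))) ` D \<union> ((\<lambda>h. ((h, True), (\<sigma> h, False))) ` D)\<inverse>"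
proof -
  have inj: "inj_on \<sigma> D" and surj: "\<sigma> ` D = D" using rot_bij unfolding bij_betw_def by auto
  have "D \<times> UNIV = (\<lambda>h. (h, True)) ` D \<union> (\<lambda>h. (h, False)) ` \<sigma> ` D"
    using surj by (auto simp: image_iff)
  then have "(\<lambda>p. (p, med_arc D \<sigma> p)) ` (D \<times> UNIV)
      = (\<lambda>h. ((h, True), med_arc D \<sigma> (h, True))) ` D \<union> (\<lambda>h. ((\<sigma> h, False), med_arc D \<sigma> (\<sigma> h, False))) ` D"
    by (simp add: image_Un image_image)
  also have "\<dots> = (\<lambda>h. ((h, True), (\<sigma> h, False))) ` D \<union> (\<lambda>h. ((\<sigma> h, False), (h, True))) ` D"
    using the_inv_into_f_f[OF inj] by (simp add: med_arc_def)
  finally show ?thesis by auto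
qed

lemma converse_pair_pair: "{(a, b), (c, d)}\<inverse> = {(b, a), (d, c)}"
  by auto

lemma smooth_pairs_edge_sym_closure:
  fixes pos :: "'d set \<Rightarrow> bool" and S :: "'d set set"
  assumes e: "e \<in> edges"
  defines "F \<equiv> state_subgraph edges pos S"
  shows "smooth_pairs {e} (med_port \<alpha> pos) S \<union> (smooth_pairs {e} (med_port \<alpha> pos) S)\<inverse>
       = (\<lambda>h. ((h, False), (edge_flip \<alpha> F h, True))) ` e
         \<union> ((\<lambda>h. ((h, False), (edge_flip \<alpha> F h, True))) ` e)\<inverse>"
proof -
  define m where "m = med_dart e"
  have em: "e = {m, \<alpha> m}" "m \<in> D" using edge_med_dart[OF e, folded m_def] by blast+
  have eF: "e \<in> F \<longleftrightarrow> pos e = (e \<in> S)" unfolding F_def state_subgraph_def using e by auto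
  have flip_m: "edge_flip \<alpha> F m = (if e \<in> F then \<alpha> m else m)"
    unfolding edge_flip_def using em by simp
  have flip_am: "edge_flip \<alpha> F (\<alpha> m) = (if e \<in> F then m else \<alpha> m)"
    unfolding edge_flip_def using em alpha_alpha[OF em(2)] by (simp add: insert_commute)
  have "(\<lambda>h. ((h, False), (edge_flip \<alpha> F h, True))) ` e
      = {((m, False), (edge_flip \<alpha> F m, True)), ((\<alpha> m, False), (edge_flip \<alpha> F (\<alpha> m), True))}"
    by (subst em(1)) simp
  then show ?thesis
    unfolding smooth_pairs_def flip_m flip_am med_port_simps m_def[symmetric] using eF
    by (cases "pos e"; cases "e \<in> S") (simp_all add: converse_pair_pair insert_commute m_def[symmetric])
qed

lemma smooth_pairs_sym_closure:
  fixes pos :: "'d set \<Rightarrow> bool" and S :: "'d set set"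
  defines "F \<equiv> state_subgraph edges pos S"
  shows "smooth_pairs edges (med_port \<alpha> pos) S \<union> (smooth_pairs edges (med_port \<alpha> pos) S)\<inverse>
       = (\<lambda>h. ((h, False), (edge_flip \<alpha> F h, True))) ` D
         \<union> ((\<lambda>h. ((h, False), (edge_flip \<alpha> F h, True))) ` D)\<inverse>"
proof -
  let ?SP = "\<lambda>e. smooth_pairs {e} (med_port \<alpha> pos) S"
  let ?g = "\<lambda>h. ((h, False), (edge_flip \<alpha> F h, True))"
  have "smooth_pairs edges (med_port \<alpha> pos) S = (\<Union>e\<in>edges. ?SP e)"
    by (simp only: smooth_pairs_def UN_insert UN_empty Un_empty_right)
  then have "smooth_pairs edges (med_port \<alpha> pos) S \<union> (smooth_pairs edges (med_port \<alpha> pos) S)\<inverse>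
      = (\<Union>e\<in>edges. ?SP e \<union> (?SP e)\<inverse>)"
    by blast
  also have "\<dots> = (\<Union>e\<in>edges. ?g ` e \<union> (?g ` e)\<inverse>)"
    using smooth_pairs_edge_sym_closure[where pos = pos and S = S] unfolding F_def by simp
  also have "\<dots> = ?g ` (\<Union>edges) \<union> (?g ` (\<Union>edges))\<inverse>"
    by blast
  also have "\<Union>edges = D" using edge_in_edges edge_subset by blast
  finally show ?thesis .
qed


lemma graph_medial_walk:
  "(\<lambda>p. (p, medial_walk \<sigma> \<alpha> F p)) ` (D \<times> UNIV)
     = (\<lambda>h. ((h, True), (\<sigma> h, False))) ` D \<union> (\<lambda>h. ((h, False), (edge_flip \<alpha> F h, True))) ` D"
proof -
  have "D \<times> UNIV = (\<lambda>h. (h, True)) ` D \<union> (\<lambda>h. (h, False)) ` D"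
    by (auto simp: image_iff)
  then show ?thesis by (simp add: image_Un image_image medial_walk_def)
qed

lemma medial_walk_orbits_False:
  "forward_orbit (medial_walk \<sigma> \<alpha> F) ` (D \<times> UNIV) = forward_orbit (medial_walk \<sigma> \<alpha> F) ` (D \<times> {False})"
proof (intro equalityI subsetI)
  let ?W = "medial_walk \<sigma> \<alpha> F"
  fix Z assume "Z \<in> forward_orbit ?W ` (D \<times> UNIV)"
  then obtain h b where h: "h \<in> D" "Z = forward_orbit ?W (h, b)" by auto
  have "?W (h, b) \<in> forward_orbit ?W (h, b)" using funpow_in_forward_orbit[where n = 1] by simp
  then have "Z = forward_orbit ?W (?W (h, b))" using forward_orbit_eq[OF perm_on_medial_walk, of "(h, b)"] h by simp
  moreover have "?W (h, True) \<in> D \<times> {False}"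
    using h rot_bij unfolding medial_walk_def bij_betw_def by auto
  ultimately show "Z \<in> forward_orbit ?W ` (D \<times> {False})"
    using h by (cases b) auto
qed auto

text \<open>Every second step of the walk is a step of the face permutation.\<close>

lemma medial_walk_first_return:
  assumes "h \<in> D"
  shows "forward_orbit (medial_walk \<sigma> \<alpha> F) (h, False) \<inter> D \<times> {False}
           = (\<lambda>k. (k, False)) ` forward_orbit (face_perm \<sigma> \<alpha> F) h"
proof -
  let ?W = "medial_walk \<sigma> \<alpha> F" and ?f = "face_perm \<sigma> \<alpha> F"
  define g where "g p = (?f (fst p), False)" for p :: "'d \<times> bool"
  have g: "g ` (D \<times> {False}) \<subseteq> D \<times> {False}"
    using perm_on_face_perm[of F] unfolding g_def perm_on_def by auto
  have "forward_orbit g (h, False) = forward_orbit ?W (h, False) \<inter> D \<times> {False}"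
  proof (rule forward_orbit_first_return[OF g])
    fix y assume "y \<in> D \<times> {False}"
    then have "g y = (?W ^^ 2) y" "?W y \<notin> D \<times> {False}"
      by (auto simp: g_def medial_walk_def face_perm_def numeral_2_eq_2)
    moreover have "(?W ^^ i) y \<notin> D \<times> {False}" if "0 < i \<and> i < 2" for i
      using that \<open>?W y \<notin> D \<times> {False}\<close> by (cases "i = 1") auto
    ultimately show "\<exists>n>0. g y = (?W ^^ n) y \<and> (\<forall>i. 0 < i \<and> i < n \<longrightarrow> (?W ^^ i) y \<notin> D \<times> {False})"
      by (intro exI[of _ 2]) auto
  qed (use assms in simp)
  moreover have "(g ^^ n) (h, False) = ((?f ^^ n) h, False)" for n
    by (induction n) (simp_all add: g_def)
  then have "forward_orbit g (h, False) = (\<lambda>k. (k, False)) ` forward_orbit ?f h"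
    unfolding forward_orbit_def by (auto simp: image_iff)
  ultimately show ?thesis by simp
qed

lemma card_medial_walk_orbits:
  "card (forward_orbit (medial_walk \<sigma> \<alpha> F) ` (D \<times> UNIV)) = card (forward_orbit (face_perm \<sigma> \<alpha> F) ` D)"
proof -
  let ?W = "medial_walk \<sigma> \<alpha> F" and ?f = "face_perm \<sigma> \<alpha> F"
  have "D \<times> {False} = (\<lambda>h. (h, False)) ` D" by auto
  then have "(\<lambda>x. forward_orbit ?W x \<inter> D \<times> {False}) ` (D \<times> {False})
      = (\<lambda>h. forward_orbit ?W (h, False) \<inter> D \<times> {False}) ` D"
    by (simp add: image_image)
  also have "\<dots> = (\<lambda>h. (\<lambda>k. (k, False)) ` forward_orbit ?f h) ` D"
    by (rule image_cong) (simp_all add: medial_walk_first_return)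
  finally have "(\<lambda>x. forward_orbit ?W x \<inter> D \<times> {False}) ` (D \<times> {False})
      = image (\<lambda>k. (k, False)) ` forward_orbit ?f ` D"
    by (simp add: image_image)
  moreover have "inj_on (image (\<lambda>k. (k, False))) (forward_orbit ?f ` D)"
    by (rule inj_onI) (auto simp: inj_image_eq_iff inj_def)
  moreover have "D \<times> {False} \<subseteq> D \<times> UNIV" by blast
  note card_forward_orbits_restrict[OF perm_on_medial_walk[of F] this]
  ultimately show ?thesis
    unfolding medial_walk_orbits_False[of F] by (simp add: card_image)
qed

theorem state_components_medial:
  "state_components edges (med_port \<alpha> pos) (med_arc D \<sigma>) (med_loops V D vert) S
     = rg_bc V vert \<sigma> \<alpha> (state_subgraph edges pos S)"
proof -
  let ?F = "state_subgraph edges pos S"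
  let ?A = "(\<lambda>p. (p, med_arc D \<sigma> p)) ` (D \<times> UNIV)"
  let ?SP = "smooth_pairs edges (med_port \<alpha> pos) S"
  let ?G = "(\<lambda>p. (p, medial_walk \<sigma> \<alpha> ?F p)) ` (D \<times> UNIV)"
  have "(?A \<union> ?SP) \<union> (?A \<union> ?SP)\<inverse> = (?A \<union> ?A\<inverse>) \<union> (?SP \<union> ?SP\<inverse>)" by blast
  also have "\<dots> = ?G \<union> ?G\<inverse>"
    unfolding graph_med_arc smooth_pairs_sym_closure graph_medial_walk by blast
  finally have "(D \<times> UNIV) // ((?A \<union> ?SP) \<union> (?A \<union> ?SP)\<inverse>)\<^sup>* = forward_orbit (medial_walk \<sigma> \<alpha> ?F) ` (D \<times> UNIV)"
    unfolding quotient_eq_image using rtrancl_graph_Image_eq_forward_orbit[OF perm_on_medial_walk]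
    by (simp cong: image_cong)
  moreover have "{(p, med_arc D \<sigma> p) | p. p \<in> D \<times> UNIV} = ?A" by blast
  moreover have "?F \<subseteq> edges" unfolding state_subgraph_def by blast
  ultimately show ?thesis
    unfolding state_components_def Let_def diag_ports_medial
    using card_medial_walk_orbits rg_bc_eq_card_face_orbits by simp
qed

end

section \<open>Evaluation of the state sum\<close>

lemma exp_i_pi_of_int: "exp (\<i> * complex_of_real pi * of_int m) = (-1) powi m"
  using exp_power_int[of "\<i> * complex_of_real pi" m] by (simp add: mult.commute)

lemma powr_neg_real_mult:
  fixes x y a b :: real and m :: int
  assumes "x < 0" "y < 0" "a + b = of_int m"
  shows "complex_of_real x powr complex_of_real a * complex_of_real y powr complex_of_real b
           = complex_of_real ((-1) powi m * (\<bar>x\<bar> powr a * \<bar>y\<bar> powr b))"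
proof -
  have "exp (\<i> * pi * a) * exp (\<i> * pi * b) = exp (\<i> * pi * (complex_of_real a + complex_of_real b))"
    by (simp add: distrib_left exp_add)
  also have "complex_of_real a + complex_of_real b = of_int m"
    using assms(3) by (metis of_real_add of_real_of_int_eq)
  finally have exps: "exp (\<i> * pi * a) * exp (\<i> * pi * b) = (-1) powi m"
    by (simp only: exp_i_pi_of_int)
  have "complex_of_real x powr complex_of_real a * complex_of_real y powr complex_of_real b
      = complex_of_real (\<bar>x\<bar> powr a * \<bar>y\<bar> powr b) * (exp (\<i> * pi * a) * exp (\<i> * pi * b))"
    using powr_of_neg_real[OF assms(1), of a] powr_of_neg_real[OF assms(2), of b] by (simp add: mult_ac)
  then show ?thesis unfolding exps by (simp add: mult.commute)
qed

lemma add_one_eq_powr_half: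
  fixes t :: real
  assumes "t > 0"
  shows "t + 1 = (t powr (1/2) + t powr (-1/2)) * t powr (1/2)"
proof -
  have "t powr (1/2) * t powr (1/2) = t" "t powr (-1/2) * t powr (1/2) = 1"
    using assms by (simp_all flip: powr_add)
  then show ?thesis by (simp add: distrib_right)
qed

text \<open>The evaluation points \<open>x = -t - 1\<close> and \<open>y = -1/t - 1\<close> of the Bollobas-Riordan polynomial are
  negative, and their half-integer powers combine to a power of the loop value \<open>d\<close>.\<close>

lemma neg_powr_product:
  fixes t a b :: real and m :: int
  assumes t: "t > 0" and ab: "a + b = of_int m"
  defines "d \<equiv> - (t powr (1/2)) - t powr (-1/2)"
  shows "complex_of_real (- t - 1) powr complex_of_real a * complex_of_real (- 1 / t - 1) powr complex_of_real b
           = complex_of_real (d powi m * t powr (of_int m / 2 - b))"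
proof -
  define e where "e = t powr (1/2) + t powr (-1/2)"
  have e: "e > 0" unfolding e_def using t by (simp add: add_pos_pos)
  have abs: "\<bar>- t - 1\<bar> = t + 1" "\<bar>- 1 / t - 1\<bar> = (t + 1) / t"
    using t by (simp_all add: field_simps)
  have "((t + 1) / t) powr b = (t + 1) powr b / t powr b" by (rule powr_divide)
  then have "(t + 1) powr a * ((t + 1) / t) powr b = (t + 1) powr a * (t + 1) powr b * t powr (- b)"
    by (simp add: powr_minus divide_inverse)
  also have "(t + 1) powr a * (t + 1) powr b = (t + 1) powr of_int m"
    using ab by (simp flip: powr_add)
  also have "(t + 1) powr of_int m = e powi m * t powr (of_int m / 2)"
  proof -
    have "(t + 1) powr of_int m = e powr of_int m * (t powr (1/2)) powr of_int m"
      unfolding add_one_eq_powr_half[OF t] e_def[symmetric] using e t by (simp add: powr_mult)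
    also have "e powr of_int m = e powi m" using e by (simp add: powr_real_of_int')
    also have "(t powr (1/2)) powr of_int m = t powr (of_int m / 2)" by (simp add: powr_powr)
    finally show ?thesis .
  qed
  finally have "(t + 1) powr a * ((t + 1) / t) powr b = e powi m * (t powr (of_int m / 2) * t powr (- b))"
    by (simp only: mult_ac)
  also have "t powr (of_int m / 2) * t powr (- b) = t powr (of_int m / 2 - b)"
    by (simp flip: powr_add)
  finally have "(-1) powi m * ((t + 1) powr a * ((t + 1) / t) powr b) = ((-1) * e) powi m * t powr (of_int m / 2 - b)"
    by (simp only: power_int_mult_distrib mult.assoc)
  also have "(-1) * e = d" unfolding d_def e_def by simp
  finally have real_part: "(-1) powi m * ((t + 1) powr a * ((t + 1) / t) powr b) = d powi m * t powr (of_int m / 2 - b)" .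
  have neg: "- t - 1 < 0" "- 1 / t - 1 < 0" using t by (simp_all add: field_simps)
  show ?thesis unfolding powr_neg_real_mult[OF neg ab] abs real_part ..
qed

lemma powr_quarter_pow:
  fixes t :: real
  assumes "t > 0"
  shows "(t powr (-1/4)) ^ a * (t powr (1/4)) ^ b = t powr ((real b - real a) / 4)"
proof -
  have "(t powr c) ^ n = t powr (c * real n)" for c n using assms by (simp add: powr_powr flip: powr_realpow)
  then show ?thesis by (simp add: diff_divide_distrib flip: powr_add)
qed

context ribbon
begin

lemma card_state_subgraph_diff:
  assumes F: "F \<subseteq> edges"
  shows "real (card (edges - state_subgraph edges pos F)) - real (card (state_subgraph edges pos F))
           = real (card edges) - 2 * real (card F) + 2 * (real (neg_count pos F) - real (neg_count pos (edges - F)))"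
proof -
  let ?S = "state_subgraph edges pos F"
  have SE: "?S \<subseteq> edges" by (rule state_subgraph_subset)
  then have "real (card (edges - ?S)) = real (card edges) - real (card ?S)"
    using card_Diff_subset[OF finite_subset[OF SE finite_edges] SE] card_mono[OF finite_edges SE]
    by (simp add: of_nat_diff)
  moreover have "real (card ?S) = real (card F) - real (neg_count pos F) + real (neg_count pos (edges - F))"
    using arg_cong[OF card_state_subgraph[OF finite_edges F, of pos], of real_of_int] by simp
  ultimately show ?thesis by (simp add: algebra_simps)
qed

text \<open>Termwise comparison of the state sum, indexed by the spanning subgraph \<open>F\<close> of the state, with
  the Bollobas-Riordan expansion: \<open>x\<close> and \<open>y\<close> contribute \<open>d\<^sup>m\<close>, \<open>z\<close> contributes \<open>d\<close> to minus twice
  the genus of \<open>F\<close>, and the exponents of \<open>d\<close> add up to \<open>bc(F) - 1\<close> by the rank-nullity relations.\<close>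

lemma bracket_term_eq_BR_term:
  fixes t :: real and pos :: "'d set \<Rightarrow> bool"
  assumes t: "t > 0" and F: "F \<subseteq> edges"
  defines "d \<equiv> - (t powr (1/2)) - t powr (-1/2)"
    and "s \<equiv> (real (neg_count pos F) - real (neg_count pos (edges - F))) / 2"
    and "S \<equiv> state_subgraph edges pos F"
  shows "complex_of_real (t powr ((real (rg_n V vert edges) - real (rg_r V vert edges)) / 4)
              * d powi (int (rg_k V vert edges) - 1))
         * (complex_of_real (- t - 1) powr complex_of_real (real (rg_r V vert edges) - real (rg_r V vert F) + s)
            * complex_of_real (- 1 / t - 1) powr complex_of_real (real (rg_n V vert F) - s)
            * complex_of_real (1 / d) ^ nat (int (rg_k V vert F) - int (rg_bc V vert \<sigma> \<alpha> F) + int (rg_n V vert F)))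
       = complex_of_real ((t powr (-1/4)) ^ card S * (t powr (1/4)) ^ card (edges - S)
                          * d powi (int (rg_bc V vert \<sigma> \<alpha> F) - 1))"
proof -
  define m where "m = int (rg_r V vert edges) - int (rg_r V vert F) + int (rg_n V vert F)"
  define X where "X = double_genus F"
  define P where "P = (real (rg_n V vert edges) - real (rg_r V vert edges)) / 4"
  define Q where "Q = real_of_int m / 2 - (real (rg_n V vert F) - s)"
  have "t powr (1/2) > 0" "t powr (-1/2) > 0" using t by simp_all
  then have "d \<noteq> 0" unfolding d_def by linarith
  have "(real (rg_r V vert edges) - real (rg_r V vert F) + s) + (real (rg_n V vert F) - s) = of_int m"
    unfolding m_def by simp
  note xy = neg_powr_product[OF t this, folded d_def Q_def]
  have "0 \<le> X" unfolding X_def by (rule double_genus_nonneg[OF F])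
  then have z: "complex_of_real (1 / d) ^ nat X = complex_of_real (d powi (- X))"
    by (simp add: power_int_def divide_inverse)
  have "d powi (int (rg_k V vert edges) - 1 + m + (- X)) = d powi (int (rg_k V vert edges) - 1) * d powi m * d powi (- X)"
  proof -
    have "d powi (a + b) = d powi a * d powi b" for a b using \<open>d \<noteq> 0\<close> by (simp add: power_int_add)
    then show ?thesis by (simp only:)
  qed
  then have "complex_of_real (t powr P * d powi (int (rg_k V vert edges) - 1)) * (complex_of_real (d powi m * t powr Q)
          * complex_of_real (d powi (- X)))
      = complex_of_real (t powr (P + Q) * d powi (int (rg_k V vert edges) - 1 + m + (- X)))"
    by (simp add: powr_add mult_ac)
  also have "int (rg_k V vert edges) - 1 + m + (- X) = int (rg_bc V vert \<sigma> \<alpha> F) - 1"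
    unfolding m_def X_def double_genus_def using rg_r_int[of edges] rg_r_int[of F] by simp
  also have "P + Q = (real (card (edges - S)) - real (card S)) / 4"
    using card_state_subgraph_diff[OF F, of pos] rg_n_int[OF F] rg_n_int[of edges] rg_r_int[of F]
      rg_r_int[of edges]
    unfolding P_def Q_def m_def s_def S_def by (simp add: field_simps)
  also have "t powr ((real (card (edges - S)) - real (card S)) / 4)
      = (t powr (-1/4)) ^ card S * (t powr (1/4)) ^ card (edges - S)"
    by (rule powr_quarter_pow[OF t, symmetric])
  finally show ?thesis
    unfolding X_def double_genus_def P_def[symmetric] xy z[unfolded X_def double_genus_def]
    by (simp add: mult_ac)
qed


lemma kauffman_bracket_medial_eq_signed_BR:
  fixes pos :: "'d set \<Rightarrow> bool" and t :: real
  assumes t: "t > 0"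
  defines "d \<equiv> - (t powr (1/2)) - t powr (-1/2)"
  shows "complex_of_real (kauffman_bracket edges (med_port \<alpha> pos) (med_arc D \<sigma>) (med_loops V D vert)
                            (t powr (-1/4)) (t powr (1/4)) d)
       = complex_of_real (t powr ((real (rg_n V vert edges) - real (rg_r V vert edges)) / 4)
                          * d powi (int (rg_k V vert edges) - 1))
         * signed_BR V D vert \<sigma> \<alpha> pos (complex_of_real (- t - 1)) (complex_of_real (- 1 / t - 1))
             (complex_of_real (1 / d))"
proof -
  define state_term where "state_term S = (t powr (-1/4)) ^ card S * (t powr (1/4)) ^ card (edges - S)
      * d powi (int (rg_bc V vert \<sigma> \<alpha> (state_subgraph edges pos S)) - 1)" for S
  have "kauffman_bracket edges (med_port \<alpha> pos) (med_arc D \<sigma>) (med_loops V D vert)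
          (t powr (-1/4)) (t powr (1/4)) d = (\<Sum>S\<in>Pow edges. state_term S)"
    unfolding kauffman_bracket_def state_term_def state_components_medial ..
  also have "\<dots> = (\<Sum>F\<in>Pow edges. state_term (state_subgraph edges pos F))"
    using sum.reindex_bij_betw[OF bij_betw_state_subgraph] by metis
  finally have bracket: "kauffman_bracket edges (med_port \<alpha> pos) (med_arc D \<sigma>) (med_loops V D vert)
          (t powr (-1/4)) (t powr (1/4)) d = (\<Sum>F\<in>Pow edges. state_term (state_subgraph edges pos F))" .
  show ?thesis
    unfolding bracket signed_BR_def Let_def sum_distrib_left of_real_sum
  proof (rule sum.cong)
    fix F assume "F \<in> Pow edges"
    then have F: "F \<subseteq> edges" by simp
    show "complex_of_real (state_term (state_subgraph edges pos F))
      = complex_of_real (t powr ((real (rg_n V vert edges) - real (rg_r V vert edges)) / 4)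
                          * d powi (int (rg_k V vert edges) - 1)) *
        (complex_of_real (- t - 1) powr complex_of_real (real (rg_r V vert edges) - real (rg_r V vert F)
            + (real (neg_count pos F) - real (neg_count pos (edges - F))) / 2)
         * complex_of_real (- 1 / t - 1) powr complex_of_real (real (rg_n V vert F)
            - (real (neg_count pos F) - real (neg_count pos (edges - F))) / 2)
         * complex_of_real (1 / d) ^ nat (int (rg_k V vert F) - int (rg_bc V vert \<sigma> \<alpha> F) + int (rg_n V vert F)))"
      unfolding state_term_def state_subgraph_state_subgraph[OF F]
      by (rule bracket_term_eq_BR_term[OF t F, folded d_def, symmetric])
  qed simp
qed

theorem medial_jones_eq_signed_BR:
  fixes pos :: "'d set \<Rightarrow> bool" and ori :: "'d \<times> bool \<Rightarrow> bool" and t :: real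
  assumes t: "t > 0"
  defines "d \<equiv> - (t powr (1/2)) - t powr (-1/2)"
  shows "complex_of_real (medial_jones V D vert \<sigma> \<alpha> pos ori t) =
           complex_of_real ((-1) powi medial_writhe D \<alpha> pos ori
             * t powr ((3 * real_of_int (medial_writhe D \<alpha> pos ori)
                        - real (rg_r V vert edges) + real (rg_n V vert edges)) / 4)
             * d powi (int (rg_k V vert edges) - 1))
           * signed_BR V D vert \<sigma> \<alpha> pos (complex_of_real (- t - 1)) (complex_of_real (- 1 / t - 1))
               (complex_of_real (1 / d))"
proof -
  define w where "w = medial_writhe D \<alpha> pos ori"
  have "(3 * real_of_int w - real (rg_r V vert edges) + real (rg_n V vert edges)) / 4
      = 3 * real_of_int w / 4 + (real (rg_n V vert edges) - real (rg_r V vert edges)) / 4"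
    by simp
  then have "t powr ((3 * real_of_int w - real (rg_r V vert edges) + real (rg_n V vert edges)) / 4)
      = t powr (3 * real_of_int w / 4) * t powr ((real (rg_n V vert edges) - real (rg_r V vert edges)) / 4)"
    by (simp only: powr_add)
  then show ?thesis
    unfolding medial_jones_def jones_def Let_def medial_writhe_def[symmetric] w_def[symmetric]
      d_def[symmetric] of_real_mult kauffman_bracket_medial_eq_signed_BR[OF t, folded d_def]
    by (simp add: mult_ac)
qed

theorem signed_BR_eq_tutte:
  fixes pos :: "'d set \<Rightarrow> bool" and t :: real
  assumes t: "t > 0" and planar: "rg_genus V D vert \<sigma> \<alpha> = 0" and positive: "\<forall>e\<in>edges. pos e"
  shows "signed_BR V D vert \<sigma> \<alpha> pos (complex_of_real (- t - 1)) (complex_of_real (- 1 / t - 1)) z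
           = complex_of_real (tutte V edges (\<lambda>e. vert ` e) (- t) (- 1 / t))"
proof -
  have "- t - 1 \<noteq> 0" "- 1 / t - 1 \<noteq> 0" using t by (simp_all add: field_simps)
  then have nz: "complex_of_real (- t - 1) \<noteq> 0" "complex_of_real (- 1 / t - 1) \<noteq> 0"
    by (simp_all only: of_real_eq_0_iff not_False_eq_True)
  have "neg_count pos F = 0" if "F \<subseteq> edges" for F
  proof -
    have "{e \<in> F. \<not> pos e} = {}" using positive that by blast
    then show ?thesis unfolding neg_count_def by (simp only: card.empty)
  qed
  moreover have "int (rg_k V vert F) - int (rg_bc V vert \<sigma> \<alpha> F) + int (rg_n V vert F) = 0" if "F \<subseteq> edges" for F
    using double_genus_eq_0_if_genus_0[OF planar that] unfolding double_genus_def .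
  moreover have "real (rg_r V vert edges) - real (rg_r V vert F) = real (rg_r V vert edges - rg_r V vert F)"
    if "F \<subseteq> edges" for F
    using rg_r_mono[OF that order_refl] by (simp add: of_nat_diff)
  ultimately show ?thesis
    unfolding signed_BR_def tutte_def Let_def of_real_sum rg_r_def[symmetric] rg_n_def[symmetric]
    using nz by (intro sum.cong) (simp_all add: powr_nat')
qed

end

theorem corollary4p2:
  fixes V :: "'v set" and D :: "'d set" and vert :: "'d \<Rightarrow> 'v"
    and \<sigma> \<alpha> :: "'d \<Rightarrow> 'd" and pos :: "'d set \<Rightarrow> bool"
    and ori :: "'d \<times> bool \<Rightarrow> bool" and t :: real
  assumes "ribbon_graph V D vert \<sigma> \<alpha>"
    and "medial_orientation D \<sigma> \<alpha> pos ori"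
    and "t > 0"
  shows "complex_of_real (medial_jones V D vert \<sigma> \<alpha> pos ori t) =
           complex_of_real ((-1) powi medial_writhe D \<alpha> pos ori
             * t powr ((3 * real_of_int (medial_writhe D \<alpha> pos ori)
                        - real (rg_r V vert (rg_edges D \<alpha>)) + real (rg_n V vert (rg_edges D \<alpha>))) / 4)
             * (- (t powr (1/2)) - t powr (-1/2)) powi (int (rg_k V vert (rg_edges D \<alpha>)) - 1))
           * signed_BR V D vert \<sigma> \<alpha> pos (complex_of_real (- t - 1)) (complex_of_real (- 1 / t - 1))
               (complex_of_real (1 / (- (t powr (1/2)) - t powr (-1/2))))
         \<and> (rg_genus V D vert \<sigma> \<alpha> = 0 \<and> (\<forall>e\<in>rg_edges D \<alpha>. pos e) \<longrightarrow>
         medial_jones V D vert \<sigma> \<alpha> pos ori t =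
           (-1) powi medial_writhe D \<alpha> pos ori
             * t powr ((3 * real_of_int (medial_writhe D \<alpha> pos ori)
                        - real (rg_r V vert (rg_edges D \<alpha>)) + real (rg_n V vert (rg_edges D \<alpha>))) / 4)
             * (- (t powr (1/2)) - t powr (-1/2)) powi (int (rg_k V vert (rg_edges D \<alpha>)) - 1)
             * tutte V (rg_edges D \<alpha>) (\<lambda>e. vert ` e) (- t) (- 1 / t))"
proof -
  interpret ribbon V D vert \<sigma> \<alpha> by (rule ribbon.intro) (rule assms(1))
  note jones_BR = medial_jones_eq_signed_BR[OF assms(3), of pos ori]
  then show ?thesis
    using signed_BR_eq_tutte[OF assms(3)] by (auto simp flip: of_real_mult)
qed

end
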